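(* Let $\Gamma$ be a group and $\Gamma_0<\Gamma$ a finite-index normal subgroup. Suppose $\Gamma_0$ embeds as a $P_1$-Anosov subgroup of $\mathsf{SL}_d(\mathbb{R})$, i.e. there is a faithful $P_1$-Anosov representation $\Gamma_0\to\mathsf{SL}_d(\mathbb{R})$. Then there exist $r\in\mathbb{N}$ and a faithful $P_1$-Anosov representation $\Gamma\to\mathsf{SL}_r(\mathbb{R})$.
   Context: For $g\in\mathsf{SL}_d(\mathbb{R})$, let $\mu_1(g)\ge\mu_2(g)\ge\dots\ge\mu_d(g)$ be the logarithms of the singular values of $g$ (with multiplicity). For a finitely generated group $\Lambda$ with word length $|\cdot|_\Lambda$ with respect to a fixed finite generating set, a representation $\rho:\Lambda\to\mathsf{SL}_d(\mathbb{R})$ is $P_i$-Anosov ($1\le i\le d-1$) if there are constants $c,C>0$ such that $\mu_i(\rho(\gamma))-\mu_{i+1}(\rho(\gamma))\ge c|\gamma|_\Lambda - C$ for all $\gamma\in\Lambda$. A $P_1$-Anosov subgroup is the image of a $P_1$-Anosov representation. *)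

theory Defs
  imports "HOL-Algebra.Generated_Groups" "HOL-Algebra.Coset"
          "Jordan_Normal_Form.Char_Poly" "Jordan_Normal_Form.Determinant"
begin

(* Eigenvalues of a square real matrix A with multiplicity, listed in non-increasing order,
   provided the characteristic polynomial splits over the reals (as it does for the
   symmetric matrices A = g^T g used below). *)
definition eigs_desc :: "real mat \<Rightarrow> real list" where
  "eigs_desc A = (THE ls. sorted_wrt (\<ge>) ls \<and>
       char_poly A = prod_list (map (\<lambda>a. [:- a, 1:]) ls))"

definition sing_sq :: "real mat \<Rightarrow> real list" where
  "sing_sq g = eigs_desc (transpose_mat g * g)"

(* mu i g = log of the i-th singular value (1-based), i.e. log sqrt of i-th eigenvalue of g^T g *)
definition mu :: "nat \<Rightarrow> real mat \<Rightarrow> real" where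
  "mu i g = ln (sqrt (sing_sq g ! (i - 1)))"

(* Evaluation of a word in generators and their inverses (True = generator, False = inverse) *)
definition word_eval :: "('a, 'b) monoid_scheme \<Rightarrow> ('a \<times> bool) list \<Rightarrow> 'a" where
  "word_eval G ws = foldr (\<lambda>(s, b) x. (if b then s else inv\<^bsub>G\<^esub> s) \<otimes>\<^bsub>G\<^esub> x) ws \<one>\<^bsub>G\<^esub>"

definition word_length :: "('a, 'b) monoid_scheme \<Rightarrow> 'a set \<Rightarrow> 'a \<Rightarrow> nat" where
  "word_length G S g = (LEAST n. \<exists>ws. length ws = n \<and> fst ` set ws \<subseteq> S \<and> word_eval G ws = g)"

definition SL_rep :: "('a, 'b) monoid_scheme \<Rightarrow> nat \<Rightarrow> ('a \<Rightarrow> real mat) \<Rightarrow> bool" where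
  "SL_rep G d \<rho> \<longleftrightarrow>
     (\<forall>g\<in>carrier G. \<rho> g \<in> carrier_mat d d \<and> det (\<rho> g) = 1) \<and>
     (\<forall>g\<in>carrier G. \<forall>h\<in>carrier G. \<rho> (g \<otimes>\<^bsub>G\<^esub> h) = \<rho> g * \<rho> h)"

definition faithful :: "('a, 'b) monoid_scheme \<Rightarrow> ('a \<Rightarrow> real mat) \<Rightarrow> bool" where
  "faithful G \<rho> \<longleftrightarrow> inj_on \<rho> (carrier G)"

definition P_Anosov :: "('a, 'b) monoid_scheme \<Rightarrow> nat \<Rightarrow> nat \<Rightarrow> ('a \<Rightarrow> real mat) \<Rightarrow> bool" where
  "P_Anosov G d i \<rho> \<longleftrightarrow> SL_rep G d \<rho> \<and> 1 \<le> i \<and> i + 1 \<le> d \<and>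
     (\<exists>S. finite S \<and> S \<subseteq> carrier G \<and> generate G S = carrier G \<and>
        (\<exists>c C. c > 0 \<and> C > 0 \<and>
           (\<forall>\<gamma>\<in>carrier G. mu i (\<rho> \<gamma>) - mu (i + 1) (\<rho> \<gamma>) \<ge> c * real (word_length G S \<gamma>) - C)))"

end

(* Tensor induction. Fix right coset representatives t_0, ..., t_(k-1) of H in G. Every g in G
   permutes the cosets, g t_i = t_sigma(i) h_i with h_i in H, and acts on the k-fold tensor power
   of R^(d+1) by applying diag(rho(h_i), 1) in the i-th factor and then permuting the factors by
   sigma. Adjoining the diagonal entry det = +-1 makes this a faithful representation into SL:
   the adjoined entries 1 force sigma = id and rho(h_i) = 1 for a trivial image.
   The squared singular values of the tensor product are the products of those of the factors,
   so its first gap is at least the least first gap of the factors diag(rho(h_i), 1). Since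
   det rho(h_i) = 1, the adjoined singular value 1 costs at most a factor 2 in that gap. Finally
   |g| <= |h_i| + 2 for the generating set S_H together with the t_i, so the linear lower bound
   on the gap of rho over H yields one for the new representation over G. *)

theory Submission
  imports Defs "Jordan_Normal_Form.Schur_Decomposition"
begin

section \<open>Eigenvalues of Gram matrices\<close>

lemma prod_list_map_mset_cong:
  fixes f :: "'a \<Rightarrow> 'b :: comm_monoid_mult"
  assumes "mset xs = mset ys"
  shows "prod_list (map f xs) = prod_list (map f ys)"
proof -
  from assms have "mset (map f xs) = mset (map f ys)" by simp
  then have "prod_mset (mset (map f xs)) = prod_mset (mset (map f ys))" by (rule arg_cong)
  then show ?thesis by (simp only: prod_mset_prod_list)
qed

lemma linear_factors_eq_imp_mset_eq:
  fixes xs ys :: "'a :: idom list"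
  assumes "(\<Prod>x\<leftarrow>xs. [:-x, 1:]) = (\<Prod>y\<leftarrow>ys. [:-y, 1:])"
  shows "mset xs = mset ys"
  using assms
proof (induction xs arbitrary: ys)
  case Nil
  show ?case
  proof (cases ys)
    case (Cons y ys')
    have "poly (\<Prod>y\<leftarrow>ys. [:-y, 1:]) y = 0" unfolding Cons by (simp only: list.map prod_list.Cons poly_mult) simp
    moreover have "poly (\<Prod>y\<leftarrow>ys. [:-y, 1:]) y = 1" unfolding Nil.prems[symmetric] by simp
    ultimately show ?thesis by simp
  qed simp
next
  case (Cons a xs)
  have "poly (\<Prod>x\<leftarrow>a#xs. [:-x, 1:]) a = 0" by (simp only: list.map prod_list.Cons poly_mult) simp
  then have "poly (\<Prod>y\<leftarrow>ys. [:-y, 1:]) a = 0" unfolding Cons.prems .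
  then have "a \<in> set ys" unfolding poly_prod_list_zero_iff by auto
  then have m: "mset ys = mset (a # remove1 a ys)" by simp
  have "[:-a, 1:] * (\<Prod>x\<leftarrow>xs. [:-x, 1:]) = (\<Prod>x\<leftarrow>a#xs. [:-x, 1:])" by (simp only: list.map prod_list.Cons)
  also have "\<dots> = (\<Prod>y\<leftarrow>ys. [:-y, 1:])" by (rule Cons.prems)
  also have "\<dots> = (\<Prod>y\<leftarrow>a # remove1 a ys. [:-y, 1:])" by (rule prod_list_map_mset_cong[OF m])
  also have "\<dots> = [:-a, 1:] * (\<Prod>y\<leftarrow>remove1 a ys. [:-y, 1:])" by (simp only: list.map prod_list.Cons)
  finally have "(\<Prod>x\<leftarrow>xs. [:-x, 1:]) = (\<Prod>y\<leftarrow>remove1 a ys. [:-y, 1:])"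
    by (rule mult_left_cancel[THEN iffD1, rotated]) simp
  then have "mset (a # xs) = mset (a # remove1 a ys)" by (simp add: Cons.IH)
  with m show ?case by (simp only:)
qed

lemma eigs_desc_eqI:
  assumes "sorted_wrt (\<ge>) ls" and "char_poly A = (\<Prod>a\<leftarrow>ls. [:-a, 1:])"
  shows "eigs_desc A = ls"
  unfolding eigs_desc_def
proof (rule the_equality)
  fix ls' assume ls': "sorted_wrt (\<ge>) ls' \<and> char_poly A = (\<Prod>a\<leftarrow>ls'. [:-a, 1:])"
  then have "(\<Prod>a\<leftarrow>ls'. [:-a, 1:]) = (\<Prod>a\<leftarrow>ls. [:-a, 1:])" using assms(2) by simp
  then have mset: "mset ls' = mset ls" by (rule linear_factors_eq_imp_mset_eq)
  have "sort (rev ls) = rev ls'"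
    by (rule properties_for_sort) (use mset ls' in \<open>simp_all add: sorted_wrt_rev\<close>)
  moreover have "sort (rev ls) = rev ls"
    by (rule properties_for_sort) (use assms(1) in \<open>simp_all add: sorted_wrt_rev\<close>)
  ultimately show "ls' = ls" by simp
qed (use assms in simp)

lemma eigs_desc_char_poly:
  assumes "char_poly A = (\<Prod>a\<leftarrow>xs. [:-a, 1:])"
  shows "eigs_desc A = rev (sort xs)"
proof (rule eigs_desc_eqI)
  show "char_poly A = (\<Prod>a\<leftarrow>rev (sort xs). [:-a, 1:])"
    unfolding assms by (rule prod_list_map_mset_cong) simp
qed (simp add: sorted_wrt_rev)

lemma eigs_desc_char_poly_max:
  assumes "char_poly A = (\<Prod>x\<leftarrow>a # xs. [:-x, 1:])" and "\<forall>x\<in>set xs. x \<le> a"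
  shows "eigs_desc A = a # rev (sort xs)"
proof -
  have "sort (a # xs) = sort xs @ [a]"
    by (rule properties_for_sort) (use assms(2) in \<open>auto simp: sorted_append\<close>)
  then show ?thesis using eigs_desc_char_poly[OF assms(1)] by simp
qed

interpretation of_real_poly: map_poly_inj_idom_hom complex_of_real ..

lemma conjugate_of_real_mat_mult_vec:
  fixes A :: "real mat" and v :: "complex vec"
  assumes A: "A \<in> carrier_mat n n" and v: "v \<in> carrier_vec n"
  shows "conjugate (map_mat complex_of_real A *\<^sub>v v) = map_mat complex_of_real A *\<^sub>v conjugate v"
proof (rule eq_vecI)
  fix i assume "i < dim_vec (map_mat complex_of_real A *\<^sub>v conjugate v)"
  then have i: "i < n" using A by auto
  have "conjugate (map_mat complex_of_real A *\<^sub>v v) $ i = cnj (\<Sum>j<n. of_real (A $$ (i,j)) * v $ j)"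
    using A v i by (simp add: scalar_prod_def atLeast0LessThan)
  also have "\<dots> = (\<Sum>j<n. of_real (A $$ (i,j)) * cnj (v $ j))" by simp
  also have "\<dots> = (map_mat complex_of_real A *\<^sub>v conjugate v) $ i"
    using A v i by (simp add: scalar_prod_def atLeast0LessThan)
  finally show "conjugate (map_mat complex_of_real A *\<^sub>v v) $ i = (map_mat complex_of_real A *\<^sub>v conjugate v) $ i" .
qed (use A v in auto)

lemma gram_eigenvalue_pos:
  fixes A :: "real mat"
  assumes A: "A \<in> carrier_mat n n" and det: "det A \<noteq> 0"
    and ev: "eigenvalue (map_mat complex_of_real (transpose_mat A * A)) a"
  shows "a > 0"
proof -
  let ?A = "map_mat complex_of_real A"
  have A': "?A \<in> carrier_mat n n" using A by auto
  have gram: "map_mat complex_of_real (transpose_mat A * A) = transpose_mat ?A * ?A"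
    using A by (simp add: of_real_hom.mat_hom_mult map_mat_transpose)
  from ev obtain v where v: "v \<in> carrier_vec n" "v \<noteq> 0\<^sub>v n"
    and Av: "(transpose_mat ?A * ?A) *\<^sub>v v = a \<cdot>\<^sub>v v"
    unfolding eigenvalue_def eigenvector_def gram using A by auto
  have "det ?A \<noteq> 0" using A det by (simp add: of_real_hom.hom_det)
  then have Av0: "?A *\<^sub>v v \<noteq> 0\<^sub>v n" using det_0_iff_vec_prod_zero[OF A'] v by auto
  \<comment> \<open>Rayleigh quotient: \<open>a \<langle>v, v\<rangle> = \<langle>A v, A v\<rangle>\<close>.\<close>
  have "a * (conjugate v \<bullet> v) = conjugate v \<bullet> ((transpose_mat ?A * ?A) *\<^sub>v v)"
    using v by (simp add: Av scalar_prod_smult_distrib[of _ n])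
  also have "\<dots> = conjugate v \<bullet> (transpose_mat ?A *\<^sub>v (?A *\<^sub>v v))"
    using A' v by (simp add: assoc_mult_mat_vec[of _ n n _ n])
  also have "\<dots> = (transpose_mat (transpose_mat ?A) *\<^sub>v conjugate v) \<bullet> (?A *\<^sub>v v)"
    by (rule transpose_vec_mult_scalar[symmetric, of _ n n]) (use A' v in auto)
  also have "\<dots> = (?A *\<^sub>v conjugate v) \<bullet> (?A *\<^sub>v v)" by simp
  also have "\<dots> = (?A *\<^sub>v v) \<bullet>c (?A *\<^sub>v v)"
    using conjugate_of_real_mat_mult_vec[OF A v(1)] A' v
    by (metis carrier_vec_conjugate comm_scalar_prod mult_mat_vec_carrier)
  finally have eq: "a * (conjugate v \<bullet> v) = (?A *\<^sub>v v) \<bullet>c (?A *\<^sub>v v)" .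
  have q: "(?A *\<^sub>v v) \<bullet>c (?A *\<^sub>v v) > 0"
    using Av0 A' v by (subst conjugate_square_greater_0_vec[of _ n]) auto
  have p: "conjugate v \<bullet> v > 0"
    using v conjugate_square_greater_0_vec[of v n] conjugate_vec_sprod_comm[of v n v] by auto
  have "conjugate v \<bullet> v \<noteq> 0" using p by auto
  then have "a = (?A *\<^sub>v v) \<bullet>c (?A *\<^sub>v v) / (conjugate v \<bullet> v)"
    using eq by (simp add: eq_divide_eq)
  then show ?thesis using p q by (auto simp: less_complex_def Re_divide Im_divide)
qed

lemma gram_char_poly_pos_roots:
  fixes A :: "real mat"
  assumes A: "A \<in> carrier_mat n n" and det: "det A \<noteq> 0"
  obtains bs where "char_poly (transpose_mat A * A) = (\<Prod>b\<leftarrow>bs. [:-b, 1:])"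
    and "\<forall>b\<in>set bs. b > 0" and "length bs = n"
proof -
  let ?B = "transpose_mat A * A"
  have B: "?B \<in> carrier_mat n n" using A by auto
  have B': "map_mat complex_of_real ?B \<in> carrier_mat n n" using B by auto
  obtain as where as: "char_poly (map_mat complex_of_real ?B) = (\<Prod>a\<leftarrow>as. [:- a, 1:])" "length as = n"
    using char_poly_factorized[OF B'] by blast
  have pos: "a > 0" if "a \<in> set as" for a
  proof -
    have "poly (char_poly (map_mat complex_of_real ?B)) a = 0"
      unfolding as(1) using that by (simp add: poly_prod_list_zero_iff)
    then show ?thesis
      using eigenvalue_root_char_poly[OF B'] gram_eigenvalue_pos[OF A det] by blast
  qed
  define bs where "bs = map Re as"
  have "map (complex_of_real \<circ> Re) as = as"
    using pos by (intro map_idI) (auto simp: less_complex_def complex_eq_iff)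
  then have as_bs: "as = map complex_of_real bs" unfolding bs_def by simp
  have "map_poly complex_of_real (char_poly ?B) = map_poly complex_of_real (\<Prod>b\<leftarrow>bs. [:-b, 1:])"
    unfolding of_real_hom.char_poly_hom[OF B, symmetric] as(1) as_bs
    by (simp add: of_real_poly.hom_prod_list comp_def)
  then have "char_poly ?B = (\<Prod>b\<leftarrow>bs. [:-b, 1:])" by simp
  moreover have "\<forall>b\<in>set bs. b > 0" using pos unfolding bs_def by (auto simp: less_complex_def)
  moreover have "length bs = n" using as(2) bs_def by simp
  ultimately show ?thesis by (rule that)
qed

lemma sing_sq_char_poly:
  fixes A :: "real mat"
  assumes "A \<in> carrier_mat n n" and "det A \<noteq> 0"
  shows "char_poly (transpose_mat A * A) = (\<Prod>a\<leftarrow>sing_sq A. [:-a, 1:])"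
    and "\<forall>a\<in>set (sing_sq A). a > 0" and "length (sing_sq A) = n" and "sorted_wrt (\<ge>) (sing_sq A)"
proof -
  obtain bs where bs: "char_poly (transpose_mat A * A) = (\<Prod>b\<leftarrow>bs. [:-b, 1:])"
    "\<forall>b\<in>set bs. b > 0" "length bs = n"
    using gram_char_poly_pos_roots[OF assms] .
  have sing_sq: "sing_sq A = rev (sort bs)"
    unfolding sing_sq_def by (rule eigs_desc_char_poly[OF bs(1)])
  show "char_poly (transpose_mat A * A) = (\<Prod>a\<leftarrow>sing_sq A. [:-a, 1:])"
    unfolding bs(1) sing_sq by (rule prod_list_map_mset_cong) simp
  show "\<forall>a\<in>set (sing_sq A). a > 0" "length (sing_sq A) = n" "sorted_wrt (\<ge>) (sing_sq A)"
    using bs(2,3) unfolding sing_sq by (simp_all add: sorted_wrt_rev)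
qed

lemma gram_triangularization:
  fixes A :: "real mat"
  assumes A: "A \<in> carrier_mat n n" and det: "det A \<noteq> 0"
  obtains T where "similar_mat (transpose_mat A * A) T" and "T \<in> carrier_mat n n"
    and "upper_triangular T" and "diag_mat T = sing_sq A"
proof -
  have B: "transpose_mat A * A \<in> carrier_mat n n" using A by auto
  obtain T P Q where "schur_decomposition (transpose_mat A * A) (sing_sq A) = (T, P, Q)"
    by (cases "schur_decomposition (transpose_mat A * A) (sing_sq A)") auto
  from schur_decomposition[OF B sing_sq_char_poly(1)[OF A det] this]
  have "similar_mat_wit (transpose_mat A * A) T P Q" "upper_triangular T" "diag_mat T = sing_sq A"
    by auto
  moreover have "T \<in> carrier_mat n n" using similar_mat_witD2[OF B \<open>similar_mat_wit _ T P Q\<close>] by auto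
  ultimately show ?thesis using that unfolding similar_mat_def by blast
qed

lemma prod_list_sing_sq:
  fixes A :: "real mat"
  assumes A: "A \<in> carrier_mat n n" and det: "det A \<noteq> 0"
  shows "prod_list (sing_sq A) = det A ^ 2"
proof -
  obtain T where T: "similar_mat (transpose_mat A * A) T" "T \<in> carrier_mat n n"
    "upper_triangular T" "diag_mat T = sing_sq A"
    using gram_triangularization[OF A det] .
  have "det A ^ 2 = det (transpose_mat A * A)"
    using A by (simp add: det_mult[of _ n] det_transpose power2_eq_square)
  also have "\<dots> = det T" by (rule det_similar[OF T(1)])
  also have "\<dots> = prod_list (sing_sq A)" using det_upper_triangular[OF T(3,2)] T(4) by simp
  finally show ?thesis by simp
qed

lemma mu_diff_eq:
  assumes "0 < sing_sq A ! 0" and "0 < sing_sq A ! 1"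
  shows "mu 1 A - mu 2 A = (ln (sing_sq A ! 0) - ln (sing_sq A ! 1)) / 2"
  using assms by (simp add: mu_def ln_sqrt diff_divide_distrib)

lemma mu_gap_nonneg:
  fixes A :: "real mat"
  assumes A: "A \<in> carrier_mat d d" and det: "det A \<noteq> 0" and d: "2 \<le> d"
  shows "0 \<le> mu 1 A - mu 2 A"
proof -
  note s = sing_sq_char_poly[OF A det]
  have le: "sing_sq A ! 1 \<le> sing_sq A ! 0" using sorted_wrt_nth_less[OF s(4), of 0 1] s(3) d by simp
  have "sing_sq A ! 1 \<in> set (sing_sq A)" using s(3) d by simp
  then have pos: "0 < sing_sq A ! 1" using s(2) by blast
  have "mu 1 A - mu 2 A = (ln (sing_sq A ! 0) - ln (sing_sq A ! 1)) / 2"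
    using le pos by (intro mu_diff_eq) auto
  moreover have "ln (sing_sq A ! 1) \<le> ln (sing_sq A ! 0)" using le pos by simp
  ultimately show ?thesis by simp
qed

section \<open>Adjoining a diagonal entry\<close>

definition mat_extend :: "'a :: comm_ring_1 mat \<Rightarrow> 'a \<Rightarrow> 'a mat" where
  "mat_extend A e = four_block_mat A (0\<^sub>m (dim_row A) 1) (0\<^sub>m 1 (dim_col A)) (mat 1 1 (\<lambda>_. e))"

lemma mat_extend_dims [simp]:
  "dim_row (mat_extend A e) = Suc (dim_row A)" "dim_col (mat_extend A e) = Suc (dim_col A)"
  unfolding mat_extend_def by simp_all

lemma mat_extend_carrier [simp]:
  "A \<in> carrier_mat n n \<Longrightarrow> mat_extend A e \<in> carrier_mat (Suc n) (Suc n)"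
  by auto

lemma mat_extend_index:
  assumes "A \<in> carrier_mat n n" and "i \<le> n" and "j \<le> n"
  shows "mat_extend A e $$ (i, j) = (if i < n \<and> j < n then A $$ (i, j) else if i = j then e else 0)"
  using assms unfolding mat_extend_def by auto

lemma mat_extend_mult:
  assumes A: "A \<in> carrier_mat n n" and B: "B \<in> carrier_mat n n"
  shows "mat_extend A e * mat_extend B e' = mat_extend (A * B) (e * e')"
proof -
  have dims: "dim_row A = n" "dim_col A = n" "dim_row B = n" "dim_col B = n" using A B by auto
  have "mat_extend A e * mat_extend B e' = four_block_mat
      (A * B + 0\<^sub>m n 1 * 0\<^sub>m 1 n) (A * 0\<^sub>m n 1 + 0\<^sub>m n 1 * mat 1 1 (\<lambda>_. e'))
      (0\<^sub>m 1 n * B + mat 1 1 (\<lambda>_. e) * 0\<^sub>m 1 n) (0\<^sub>m 1 n * 0\<^sub>m n 1 + mat 1 1 (\<lambda>_. e) * mat 1 1 (\<lambda>_. e'))"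
    unfolding mat_extend_def dims by (rule mult_four_block_mat) (use A B in auto)
  also have "mat 1 1 (\<lambda>_. e) * mat 1 1 (\<lambda>_. e') = mat 1 1 (\<lambda>_. e * e')"
    by (rule eq_matI) (auto simp: scalar_prod_def)
  finally show ?thesis
    using A B by (simp add: mat_extend_def right_mult_zero_mat left_mult_zero_mat)
qed

lemma mat_extend_transpose:
  "A \<in> carrier_mat n n \<Longrightarrow> transpose_mat (mat_extend A e) = mat_extend (transpose_mat A) e"
  unfolding mat_extend_def by (rule eq_matI) auto

lemma mat_extend_one: "mat_extend (1\<^sub>m n) 1 = 1\<^sub>m (Suc n)"
  unfolding mat_extend_def by (rule eq_matI) auto

lemma upper_triangular_mat_extend:
  "A \<in> carrier_mat n n \<Longrightarrow> upper_triangular A \<Longrightarrow> upper_triangular (mat_extend A e)"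
  unfolding mat_extend_def by (rule upper_triangular_four_block) auto

lemma det_mat_extend:
  assumes "A \<in> carrier_mat n n"
  shows "det (mat_extend A e) = det A * e"
proof -
  have "det (mat 1 1 (\<lambda>_. e)) = e"
    by (subst det_upper_triangular[of _ 1]) (auto simp: diag_mat_def)
  moreover have "det (mat_extend A e) = det A * det (mat 1 1 (\<lambda>_. e))"
    unfolding mat_extend_def using assms by (intro det_four_block_mat_upper_right_zero_col) auto
  ultimately show ?thesis by simp
qed

lemma similar_mat_wit_mat_extend:
  assumes "similar_mat_wit A T P Q" and "A \<in> carrier_mat n n"
  shows "similar_mat_wit (mat_extend A e) (mat_extend T e) (mat_extend P 1) (mat_extend Q 1)"
proof -
  from assms have c: "T \<in> carrier_mat n n" "P \<in> carrier_mat n n" "Q \<in> carrier_mat n n"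
    and PQ: "P * Q = 1\<^sub>m n" "Q * P = 1\<^sub>m n" and APTQ: "A = P * T * Q"
    unfolding similar_mat_wit_def Let_def by auto
  have PT: "P * T \<in> carrier_mat n n" using c by simp
  have ext: "mat_extend (P * T * Q) e = mat_extend P 1 * mat_extend T e * mat_extend Q 1"
    by (simp only: mat_extend_mult[OF c(2) c(1)] mat_extend_mult[OF PT c(3)]) simp
  show ?thesis unfolding APTQ
    by (rule similar_mat_witI[OF _ _ ext]) (use c in \<open>auto simp: mat_extend_mult PQ mat_extend_one\<close>)
qed

lemma mat_extend_eq_one_imp:
  assumes A: "A \<in> carrier_mat n n" and one: "mat_extend A e = 1\<^sub>m (Suc n)"
  shows "A = 1\<^sub>m n"
proof (rule eq_matI)
  fix i j assume "i < dim_row (1\<^sub>m n :: 'a mat)" "j < dim_col (1\<^sub>m n :: 'a mat)"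
  then have "i < n" "j < n" by auto
  then show "A $$ (i, j) = 1\<^sub>m n $$ (i, j)"
    using arg_cong[OF one, of "\<lambda>M. M $$ (i, j)"] A by (simp add: mat_extend_index)
qed (use A in auto)

section \<open>Base-\<open>D\<close> digits and permuted tensor products\<close>

definition digit :: "nat \<Rightarrow> nat \<Rightarrow> nat \<Rightarrow> nat" where
  "digit D p i = p div D ^ i mod D"

lemma digit_less: "0 < D \<Longrightarrow> digit D p i < D"
  by (simp add: digit_def)

lemma digit_of_0 [simp]: "digit D 0 i = 0"
  by (simp add: digit_def)

lemma digit_add_mult:
  assumes "b < D"
  shows "digit D (b + a * D) 0 = b" and "digit D (b + a * D) (Suc i) = digit D a i"
  using assms by (simp_all add: digit_def div_mult2_eq mult.commute)

lemma sum_lessThan_mult: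
  fixes g :: "nat \<Rightarrow> 'a :: comm_monoid_add"
  shows "sum g {..<m * D} = (\<Sum>a<m. \<Sum>b<D. g (b + a * D))"
proof -
  have "sum g {..<m * D} = (\<Sum>a<m. sum g {a * D..<a * D + D})" using sum.nat_group[of g D m] by simp
  also have "\<dots> = (\<Sum>a<m. \<Sum>b<D. g (b + a * D))"
  proof (rule sum.cong[OF refl])
    fix a
    have "sum g {0 + a * D..<D + a * D} = (\<Sum>b = 0..<D. g (b + a * D))" by (rule sum.shift_bounds_nat_ivl)
    then show "sum g {a * D..<a * D + D} = (\<Sum>b<D. g (b + a * D))" by (simp add: add.commute atLeast0LessThan)
  qed
  finally show ?thesis .
qed

lemma prod_lessThan_mult:
  fixes g :: "nat \<Rightarrow> 'a :: comm_monoid_mult"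
  shows "prod g {..<m * D} = (\<Prod>a<m. \<Prod>b<D. g (b + a * D))"
proof -
  have "prod g {..<m * D} = (\<Prod>a<m. prod g {a * D..<a * D + D})" using prod.nat_group[of g D m] by simp
  also have "\<dots> = (\<Prod>a<m. \<Prod>b<D. g (b + a * D))"
  proof (rule prod.cong[OF refl])
    fix a
    have "prod g {0 + a * D..<D + a * D} = (\<Prod>b = 0..<D. g (b + a * D))" by (rule prod.shift_bounds_nat_ivl)
    then show "prod g {a * D..<a * D + D} = (\<Prod>b<D. g (b + a * D))" by (simp add: add.commute atLeast0LessThan)
  qed
  finally show ?thesis .
qed

lemma sum_prod_digits:
  fixes g :: "nat \<Rightarrow> nat \<Rightarrow> 'a :: comm_semiring_1"
  shows "(\<Sum>p<D ^ k. \<Prod>i<k. g i (digit D p i)) = (\<Prod>i<k. \<Sum>j<D. g i j)"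
proof (induction k arbitrary: g)
  case (Suc k)
  have "(\<Sum>p<D ^ Suc k. \<Prod>i<Suc k. g i (digit D p i))
      = (\<Sum>a<D ^ k. \<Sum>b<D. \<Prod>i<Suc k. g i (digit D (b + a * D) i))"
    unfolding power_Suc2 by (rule sum_lessThan_mult)
  also have "\<dots> = (\<Sum>a<D ^ k. \<Sum>b<D. g 0 b * (\<Prod>i<k. g (Suc i) (digit D a i)))"
    by (intro sum.cong refl) (unfold prod.lessThan_Suc_shift, simp add: digit_add_mult)
  also have "\<dots> = (\<Sum>a<D ^ k. (\<Sum>b<D. g 0 b) * (\<Prod>i<k. g (Suc i) (digit D a i)))"
    by (simp add: sum_distrib_right)
  also have "\<dots> = (\<Sum>b<D. g 0 b) * (\<Sum>a<D ^ k. \<Prod>i<k. g (Suc i) (digit D a i))"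
    by (simp add: sum_distrib_left)
  also have "\<dots> = (\<Sum>b<D. g 0 b) * (\<Prod>i<k. \<Sum>j<D. g (Suc i) j)"
    using Suc.IH[of "\<lambda>i. g (Suc i)"] by simp
  also have "\<dots> = (\<Prod>i<Suc k. \<Sum>j<D. g i j)"
    by (simp only: prod.lessThan_Suc_shift)
  finally show ?case .
qed simp

lemma prod_prod_digits_eq_1:
  fixes g :: "nat \<Rightarrow> nat \<Rightarrow> 'a :: comm_semiring_1"
  assumes "\<And>i. i < k \<Longrightarrow> (\<Prod>j<D. g i j) = 1"
  shows "(\<Prod>p<D ^ k. \<Prod>i<k. g i (digit D p i)) = 1"
  using assms
proof (induction k arbitrary: g)
  case (Suc k)
  have "(\<Prod>p<D ^ Suc k. \<Prod>i<Suc k. g i (digit D p i))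
      = (\<Prod>a<D ^ k. \<Prod>b<D. \<Prod>i<Suc k. g i (digit D (b + a * D) i))"
    unfolding power_Suc2 by (rule prod_lessThan_mult)
  also have "\<dots> = (\<Prod>a<D ^ k. \<Prod>b<D. g 0 b * (\<Prod>i<k. g (Suc i) (digit D a i)))"
    by (intro prod.cong refl) (unfold prod.lessThan_Suc_shift, simp add: digit_add_mult)
  also have "\<dots> = (\<Prod>a<D ^ k. (\<Prod>b<D. g 0 b) * (\<Prod>i<k. g (Suc i) (digit D a i)) ^ D)"
    by (simp add: prod.distrib)
  also have "\<dots> = (\<Prod>a<D ^ k. \<Prod>i<k. g (Suc i) (digit D a i)) ^ D"
    using Suc.prems[of 0] by (simp add: prod_power_distrib)
  also have "(\<Prod>a<D ^ k. \<Prod>i<k. g (Suc i) (digit D a i)) = 1"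
    by (rule Suc.IH) (simp add: Suc.prems)
  finally show ?case by simp
qed simp

lemma digits_le_imp_le:
  assumes D: "0 < D" and "p < D ^ k" "q < D ^ k" and "\<And>i. i < k \<Longrightarrow> digit D p i \<le> digit D q i"
  shows "p \<le> q"
  using assms(2-)
proof (induction k arbitrary: p q)
  case (Suc k)
  have div: "p div D \<le> q div D"
  proof (rule Suc.IH)
    show "p div D < D ^ k" "q div D < D ^ k"
      using Suc.prems(1,2) D by (simp_all add: div_less_iff_less_mult mult.commute)
    show "digit D (p div D) i \<le> digit D (q div D) i" if "i < k" for i
      using Suc.prems(3)[of "Suc i"] that by (simp add: digit_def div_mult2_eq mult.commute)
  qed
  have mod: "p mod D \<le> q mod D" using Suc.prems(3)[of 0] by (simp add: digit_def)
  show ?case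
  proof (cases "p div D = q div D")
    case True
    then show ?thesis using mod by (metis div_mult_mod_eq add_le_cancel_left)
  next
    case False
    with div have "p div D + 1 \<le> q div D" by simp
    then have "D * (p div D + 1) \<le> D * (q div D)" by (rule mult_le_mono2)
    moreover have "p < D * (p div D + 1)"
      using D by (metis add.commute distrib_left div_mult_mod_eq mod_less_divisor mult.commute
          mult_1_right nat_add_left_cancel_less)
    moreover have "D * (q div D) \<le> q" by (metis div_mult_mod_eq le_add1 mult.commute)
    ultimately show ?thesis by linarith
  qed
qed simp

lemma digits_eq_imp_eq:
  assumes "0 < D" "p < D ^ k" "q < D ^ k" and "\<And>i. i < k \<Longrightarrow> digit D p i = digit D q i"
  shows "p = q"
  using digits_le_imp_le[OF assms(1,2,3)] digits_le_imp_le[OF assms(1,3,2)] assms(4)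
  by (metis order.eq_iff order_refl)

lemma digits_surj:
  assumes "\<And>i. i < k \<Longrightarrow> y i < D"
  shows "\<exists>p < D ^ k. \<forall>i<k. digit D p i = y i"
  using assms
proof (induction k arbitrary: y)
  case (Suc k)
  obtain p where p: "p < D ^ k" "\<forall>i<k. digit D p i = y (Suc i)"
    using Suc.IH[of "\<lambda>i. y (Suc i)"] Suc.prems by auto
  have y0: "y 0 < D" using Suc.prems by simp
  have "p * D + D \<le> D ^ k * D" using p(1) by (metis Suc_leI mult_Suc mult_le_mono1 add.commute)
  then have "y 0 + p * D < D ^ Suc k" unfolding power_Suc2 using y0 by linarith
  moreover have "digit D (y 0 + p * D) i = y i" if "i < Suc k" for i
    using that y0 p(2) by (cases i) (simp_all add: digit_add_mult)
  ultimately show ?case by blast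
qed simp

lemma index_mult_mat_sum:
  assumes "A \<in> carrier_mat n m" "B \<in> carrier_mat m l" "p < n" "q < l"
  shows "(A * B) $$ (p, q) = (\<Sum>z<m. A $$ (p, z) * B $$ (z, q))"
  using assms by (simp add: scalar_prod_def atLeast0LessThan)

(* The Kronecker product of F 0, ..., F (k - 1), followed by the permutation sigma of the tensor
   factors; the basis vectors of the k-fold tensor power of a D-dimensional space are indexed by
   the numbers p < D ^ k through their base-D digits. *)
definition perm_tensor :: "nat \<Rightarrow> nat \<Rightarrow> (nat \<Rightarrow> nat) \<Rightarrow> (nat \<Rightarrow> 'a :: comm_ring_1 mat) \<Rightarrow> 'a mat" where
  "perm_tensor D k \<sigma> F = mat (D ^ k) (D ^ k) (\<lambda>(p, q). \<Prod>i<k. F i $$ (digit D p (\<sigma> i), digit D q i))"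

lemma perm_tensor_carrier [simp]: "perm_tensor D k \<sigma> F \<in> carrier_mat (D ^ k) (D ^ k)"
  unfolding perm_tensor_def by simp

lemma perm_tensor_dims [simp]:
  "dim_row (perm_tensor D k \<sigma> F) = D ^ k" "dim_col (perm_tensor D k \<sigma> F) = D ^ k"
  unfolding perm_tensor_def by simp_all

lemma perm_tensor_index:
  "p < D ^ k \<Longrightarrow> q < D ^ k \<Longrightarrow>
    perm_tensor D k \<sigma> F $$ (p, q) = (\<Prod>i<k. F i $$ (digit D p (\<sigma> i), digit D q i))"
  unfolding perm_tensor_def by simp

lemma perm_tensor_cong:
  assumes "\<And>i. i < k \<Longrightarrow> \<sigma> i = \<sigma>' i" and "\<And>i. i < k \<Longrightarrow> F i = F' i"
  shows "perm_tensor D k \<sigma> F = perm_tensor D k \<sigma>' F'"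
  unfolding perm_tensor_def using assms by (intro cong_mat refl) (auto intro!: prod.cong)

lemma perm_tensor_index_inv:
  assumes \<tau>: "bij_betw \<tau> {..<k} {..<k}" and "p < D ^ k" "q < D ^ k"
  defines "\<tau>' \<equiv> the_inv_into {..<k} \<tau>"
  shows "perm_tensor D k \<tau> G $$ (p, q) = (\<Prod>i<k. G (\<tau>' i) $$ (digit D p i, digit D q (\<tau>' i)))"
proof -
  have \<tau>': "bij_betw \<tau>' {..<k} {..<k}" unfolding \<tau>'_def by (rule bij_betw_the_inv_into[OF \<tau>])
  have "perm_tensor D k \<tau> G $$ (p, q) = (\<Prod>i<k. G i $$ (digit D p (\<tau> i), digit D q i))"
    using assms(2,3) by (simp add: perm_tensor_index)
  also have "\<dots> = (\<Prod>i<k. G (\<tau>' i) $$ (digit D p (\<tau> (\<tau>' i)), digit D q (\<tau>' i)))"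
    by (rule prod.reindex_bij_betw[OF \<tau>', symmetric])
  also have "\<dots> = (\<Prod>i<k. G (\<tau>' i) $$ (digit D p i, digit D q (\<tau>' i)))"
    by (rule prod.cong) (use f_the_inv_into_f_bij_betw[OF \<tau>] in \<open>simp_all add: \<tau>'_def\<close>)
  finally show ?thesis .
qed

lemma perm_tensor_mult:
  assumes D: "0 < D"
    and F: "\<And>i. i < k \<Longrightarrow> F i \<in> carrier_mat D D"
    and G: "\<And>i. i < k \<Longrightarrow> G i \<in> carrier_mat D D"
    and \<tau>: "bij_betw \<tau> {..<k} {..<k}"
  shows "perm_tensor D k \<sigma> F * perm_tensor D k \<tau> G = perm_tensor D k (\<sigma> \<circ> \<tau>) (\<lambda>i. F (\<tau> i) * G i)"
proof (rule eq_matI)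
  fix p q assume "p < dim_row (perm_tensor D k (\<sigma> \<circ> \<tau>) (\<lambda>i. F (\<tau> i) * G i))"
    "q < dim_col (perm_tensor D k (\<sigma> \<circ> \<tau>) (\<lambda>i. F (\<tau> i) * G i))"
  then have p: "p < D ^ k" and q: "q < D ^ k" by auto
  define \<tau>' where "\<tau>' = the_inv_into {..<k} \<tau>"
  have \<tau>'_less: "\<tau>' i < k" if "i < k" for i
    using bij_betw_the_inv_into[OF \<tau>] that unfolding \<tau>'_def by (auto simp: bij_betw_def)
  have \<tau>'_\<tau>: "\<tau>' (\<tau> i) = i" if "i < k" for i
    unfolding \<tau>'_def using the_inv_into_f_f[OF bij_betw_imp_inj_on[OF \<tau>]] that by auto
  have "(perm_tensor D k \<sigma> F * perm_tensor D k \<tau> G) $$ (p, q)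
      = (\<Sum>z<D ^ k. perm_tensor D k \<sigma> F $$ (p, z) * perm_tensor D k \<tau> G $$ (z, q))"
    by (rule index_mult_mat_sum[OF perm_tensor_carrier perm_tensor_carrier p q])
  also have "\<dots> = (\<Sum>z<D ^ k. \<Prod>i<k. F i $$ (digit D p (\<sigma> i), digit D z i)
      * G (\<tau>' i) $$ (digit D z i, digit D q (\<tau>' i)))"
  proof (rule sum.cong[OF refl])
    fix z assume "z \<in> {..<D ^ k}"
    then have z: "z < D ^ k" by simp
    show "perm_tensor D k \<sigma> F $$ (p, z) * perm_tensor D k \<tau> G $$ (z, q) = (\<Prod>i<k.
        F i $$ (digit D p (\<sigma> i), digit D z i) * G (\<tau>' i) $$ (digit D z i, digit D q (\<tau>' i)))"
      unfolding perm_tensor_index_inv[OF \<tau> z q] perm_tensor_index[OF p z] \<tau>'_def by (simp add: prod.distrib)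
  qed
  also have "\<dots> = (\<Prod>i<k. \<Sum>j<D. F i $$ (digit D p (\<sigma> i), j) * G (\<tau>' i) $$ (j, digit D q (\<tau>' i)))"
    by (rule sum_prod_digits)
  also have "\<dots> = (\<Prod>i<k. (F i * G (\<tau>' i)) $$ (digit D p (\<sigma> i), digit D q (\<tau>' i)))"
    by (rule prod.cong[OF refl], rule index_mult_mat_sum[symmetric])
      (auto intro: F G \<tau>'_less simp: digit_less[OF D])
  also have "\<dots> = (\<Prod>i<k. (F (\<tau> i) * G (\<tau>' (\<tau> i))) $$ (digit D p (\<sigma> (\<tau> i)), digit D q (\<tau>' (\<tau> i))))"
    by (rule prod.reindex_bij_betw[OF \<tau>, symmetric])
  also have "\<dots> = perm_tensor D k (\<sigma> \<circ> \<tau>) (\<lambda>i. F (\<tau> i) * G i) $$ (p, q)"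
    by (simp add: perm_tensor_index p q \<tau>'_\<tau>)
  finally show "(perm_tensor D k \<sigma> F * perm_tensor D k \<tau> G) $$ (p, q)
      = perm_tensor D k (\<sigma> \<circ> \<tau>) (\<lambda>i. F (\<tau> i) * G i) $$ (p, q)" .
qed auto

lemma perm_tensor_id_mult:
  assumes "0 < D" and "\<And>i. i < k \<Longrightarrow> F i \<in> carrier_mat D D" and "\<And>i. i < k \<Longrightarrow> G i \<in> carrier_mat D D"
  shows "perm_tensor D k id F * perm_tensor D k id G = perm_tensor D k id (\<lambda>i. F i * G i)"
  using perm_tensor_mult[OF assms bij_betw_id] by simp

lemma perm_tensor_transpose:
  assumes D: "0 < D"
    and F: "\<And>i. i < k \<Longrightarrow> F i \<in> carrier_mat D D"
    and \<sigma>: "bij_betw \<sigma> {..<k} {..<k}"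
  defines "\<sigma>' \<equiv> the_inv_into {..<k} \<sigma>"
  shows "transpose_mat (perm_tensor D k \<sigma> F) = perm_tensor D k \<sigma>' (\<lambda>i. transpose_mat (F (\<sigma>' i)))"
proof (rule eq_matI)
  fix p q assume "p < dim_row (perm_tensor D k \<sigma>' (\<lambda>i. transpose_mat (F (\<sigma>' i))))"
    "q < dim_col (perm_tensor D k \<sigma>' (\<lambda>i. transpose_mat (F (\<sigma>' i))))"
  then have p: "p < D ^ k" and q: "q < D ^ k" by auto
  have \<sigma>'_less: "\<sigma>' i < k" if "i < k" for i
    using bij_betw_the_inv_into[OF \<sigma>] that unfolding \<sigma>'_def by (auto simp: bij_betw_def)
  have "transpose_mat (perm_tensor D k \<sigma> F) $$ (p, q) = (\<Prod>i<k. F (\<sigma>' i) $$ (digit D q i, digit D p (\<sigma>' i)))"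
    using perm_tensor_index_inv[OF \<sigma> q p] p q unfolding \<sigma>'_def by simp
  also have "\<dots> = (\<Prod>i<k. transpose_mat (F (\<sigma>' i)) $$ (digit D p (\<sigma>' i), digit D q i))"
  proof (rule prod.cong[OF refl])
    fix i assume "i \<in> {..<k}"
    then have "F (\<sigma>' i) \<in> carrier_mat D D" using F \<sigma>'_less by simp
    then show "F (\<sigma>' i) $$ (digit D q i, digit D p (\<sigma>' i))
        = transpose_mat (F (\<sigma>' i)) $$ (digit D p (\<sigma>' i), digit D q i)"
      by (simp add: digit_less[OF D])
  qed
  also have "\<dots> = perm_tensor D k \<sigma>' (\<lambda>i. transpose_mat (F (\<sigma>' i))) $$ (p, q)"
    by (simp add: perm_tensor_index p q)
  finally show "transpose_mat (perm_tensor D k \<sigma> F) $$ (p, q)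
      = perm_tensor D k \<sigma>' (\<lambda>i. transpose_mat (F (\<sigma>' i))) $$ (p, q)" .
qed auto

lemma perm_tensor_gram:
  assumes D: "0 < D"
    and F: "\<And>i. i < k \<Longrightarrow> F i \<in> carrier_mat D D"
    and \<sigma>: "bij_betw \<sigma> {..<k} {..<k}"
  shows "transpose_mat (perm_tensor D k \<sigma> F) * perm_tensor D k \<sigma> F
    = perm_tensor D k id (\<lambda>i. transpose_mat (F i) * F i)"
proof -
  let ?\<sigma>' = "the_inv_into {..<k} \<sigma>"
  have \<sigma>'_\<sigma>: "?\<sigma>' (\<sigma> i) = i" if "i < k" for i
    using the_inv_into_f_f[OF bij_betw_imp_inj_on[OF \<sigma>]] that by simp
  have \<sigma>'_less: "?\<sigma>' i < k" if "i < k" for i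
    using bij_betw_the_inv_into[OF \<sigma>] that by (auto simp: bij_betw_def)
  have "transpose_mat (perm_tensor D k \<sigma> F) * perm_tensor D k \<sigma> F
      = perm_tensor D k ?\<sigma>' (\<lambda>i. transpose_mat (F (?\<sigma>' i))) * perm_tensor D k \<sigma> F"
    by (simp only: perm_tensor_transpose[OF D F \<sigma>])
  also have "\<dots> = perm_tensor D k (?\<sigma>' \<circ> \<sigma>) (\<lambda>i. transpose_mat (F (?\<sigma>' (\<sigma> i))) * F i)"
    by (rule perm_tensor_mult[OF D _ F \<sigma>, where F = "\<lambda>i. transpose_mat (F (?\<sigma>' i))"])
      (use F \<sigma>'_less in auto)
  also have "\<dots> = perm_tensor D k id (\<lambda>i. transpose_mat (F i) * F i)"
    by (rule perm_tensor_cong) (simp_all add: \<sigma>'_\<sigma>)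
  finally show ?thesis .
qed

lemma perm_tensor_eq_one:
  assumes D: "0 < D" and "\<And>i. i < k \<Longrightarrow> \<sigma> i = i" and "\<And>i. i < k \<Longrightarrow> F i = 1\<^sub>m D"
  shows "perm_tensor D k \<sigma> F = 1\<^sub>m (D ^ k)"
proof (rule eq_matI)
  fix p q assume "p < dim_row (1\<^sub>m (D ^ k) :: 'a mat)" "q < dim_col (1\<^sub>m (D ^ k) :: 'a mat)"
  then have p: "p < D ^ k" and q: "q < D ^ k" by auto
  have "perm_tensor D k \<sigma> F $$ (p, q) = (\<Prod>i<k. if digit D p i = digit D q i then 1 else 0)"
    using p q assms by (simp add: perm_tensor_index digit_less)
  also have "\<dots> = (if p = q then 1 else 0)"
  proof (cases "p = q")
    case False
    then obtain i where "i < k" "digit D p i \<noteq> digit D q i" using digits_eq_imp_eq[OF D p q] by blast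
    then show ?thesis using False by (auto intro!: prod_zero bexI[of _ i])
  qed simp
  finally show "perm_tensor D k \<sigma> F $$ (p, q) = 1\<^sub>m (D ^ k) $$ (p, q)" using p q by simp
qed auto

lemma upper_triangular_perm_tensor_id:
  assumes D: "0 < D"
    and F: "\<And>i. i < k \<Longrightarrow> F i \<in> carrier_mat D D" and U: "\<And>i. i < k \<Longrightarrow> upper_triangular (F i)"
  shows "upper_triangular (perm_tensor D k id F)"
proof (rule upper_triangularI)
  fix p q assume qp: "q < p" and "p < dim_row (perm_tensor D k id F)"
  then have p: "p < D ^ k" and q: "q < D ^ k" by auto
  obtain i where i: "i < k" "digit D q i < digit D p i"
    using digits_le_imp_le[OF D p q] qp by force
  have "F i $$ (digit D p i, digit D q i) = 0"
    using upper_triangularD[OF U[OF i(1)] i(2)] F[OF i(1)] digit_less[OF D] by auto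
  then show "perm_tensor D k id F $$ (p, q) = 0"
    using p q i(1) by (auto simp: perm_tensor_index intro: prod_zero)
qed

lemma perm_tensor_id_inverse:
  assumes D: "0 < D"
    and F: "\<And>i. i < k \<Longrightarrow> F i \<in> carrier_mat D D" and G: "\<And>i. i < k \<Longrightarrow> G i \<in> carrier_mat D D"
    and FG: "\<And>i. i < k \<Longrightarrow> F i * G i = 1\<^sub>m D"
  shows "perm_tensor D k id F * perm_tensor D k id G = 1\<^sub>m (D ^ k)"
proof -
  have "perm_tensor D k id F * perm_tensor D k id G = perm_tensor D k id (\<lambda>i. F i * G i)"
    using D F G by (rule perm_tensor_id_mult)
  also have "\<dots> = 1\<^sub>m (D ^ k)" by (rule perm_tensor_eq_one[OF D]) (simp_all add: FG)
  finally show ?thesis .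
qed

lemma similar_mat_wit_perm_tensor_id:
  assumes D: "0 < D"
    and A: "\<And>i. i < k \<Longrightarrow> A i \<in> carrier_mat D D"
    and sim: "\<And>i. i < k \<Longrightarrow> similar_mat_wit (A i) (B i) (P i) (Q i)"
  shows "similar_mat_wit (perm_tensor D k id A) (perm_tensor D k id B)
    (perm_tensor D k id P) (perm_tensor D k id Q)"
proof -
  have wit: "B i \<in> carrier_mat D D" "P i \<in> carrier_mat D D" "Q i \<in> carrier_mat D D"
    "P i * Q i = 1\<^sub>m D" "Q i * P i = 1\<^sub>m D" "A i = P i * B i * Q i" if "i < k" for i
    using similar_mat_witD2[OF A sim, OF that that] by auto
  have PB: "perm_tensor D k id (\<lambda>i. P i * B i) = perm_tensor D k id P * perm_tensor D k id B"
    by (rule perm_tensor_id_mult[OF D, symmetric]) (use wit in auto)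
  have "perm_tensor D k id A = perm_tensor D k id (\<lambda>i. P i * B i * Q i)"
    by (rule perm_tensor_cong) (simp_all add: wit)
  also have "\<dots> = perm_tensor D k id (\<lambda>i. P i * B i) * perm_tensor D k id Q"
    by (rule perm_tensor_id_mult[OF D, symmetric]) (auto intro!: mult_carrier_mat wit)
  finally have A_eq: "perm_tensor D k id A = perm_tensor D k id P * perm_tensor D k id B * perm_tensor D k id Q"
    unfolding PB .
  have PQ: "perm_tensor D k id P * perm_tensor D k id Q = 1\<^sub>m (D ^ k)"
    using D wit(2,3,4) by (rule perm_tensor_id_inverse)
  have QP: "perm_tensor D k id Q * perm_tensor D k id P = 1\<^sub>m (D ^ k)"
    using D wit(3,2,5) by (rule perm_tensor_id_inverse)
  show ?thesis
    by (rule similar_mat_witI[OF PQ QP A_eq]) auto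
qed

section \<open>Extended tensor products and their singular values\<close>

definition tensor_ext :: "nat \<Rightarrow> nat \<Rightarrow> (nat \<Rightarrow> nat) \<Rightarrow> (nat \<Rightarrow> 'a :: comm_ring_1 mat) \<Rightarrow> 'a mat" where
  "tensor_ext d k \<sigma> F = perm_tensor (Suc d) k \<sigma> (\<lambda>i. mat_extend (F i) 1)"

definition sl_extend :: "'a :: comm_ring_1 mat \<Rightarrow> 'a mat" where
  "sl_extend M = mat_extend M (det M)"

definition sing_sq_ext :: "real mat \<Rightarrow> nat \<Rightarrow> real" where
  "sing_sq_ext A j = (if j < dim_row A then sing_sq A ! j else 1)"

lemma tensor_ext_carrier [simp]: "tensor_ext d k \<sigma> F \<in> carrier_mat (Suc d ^ k) (Suc d ^ k)"
  unfolding tensor_ext_def by simp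

lemma tensor_ext_mult:
  assumes F: "\<And>i. i < k \<Longrightarrow> F i \<in> carrier_mat d d" and G: "\<And>i. i < k \<Longrightarrow> G i \<in> carrier_mat d d"
    and \<tau>: "bij_betw \<tau> {..<k} {..<k}"
  shows "tensor_ext d k \<sigma> F * tensor_ext d k \<tau> G = tensor_ext d k (\<sigma> \<circ> \<tau>) (\<lambda>i. F (\<tau> i) * G i)"
proof -
  have \<tau>_less: "\<tau> i < k" if "i < k" for i using \<tau> that by (auto simp: bij_betw_def)
  have "tensor_ext d k \<sigma> F * tensor_ext d k \<tau> G
      = perm_tensor (Suc d) k (\<sigma> \<circ> \<tau>) (\<lambda>i. mat_extend (F (\<tau> i)) 1 * mat_extend (G i) 1)"
    unfolding tensor_ext_def
    by (rule perm_tensor_mult[where F = "\<lambda>i. mat_extend (F i) 1" and G = "\<lambda>i. mat_extend (G i) 1"])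
      (use F G \<tau> in auto)
  also have "\<dots> = tensor_ext d k (\<sigma> \<circ> \<tau>) (\<lambda>i. F (\<tau> i) * G i)"
    unfolding tensor_ext_def by (rule perm_tensor_cong) (simp_all add: mat_extend_mult[of _ d] F G \<tau>_less)
  finally show ?thesis .
qed

lemma tensor_ext_gram:
  assumes F: "\<And>i. i < k \<Longrightarrow> F i \<in> carrier_mat d d" and \<sigma>: "bij_betw \<sigma> {..<k} {..<k}"
  shows "transpose_mat (tensor_ext d k \<sigma> F) * tensor_ext d k \<sigma> F
    = perm_tensor (Suc d) k id (\<lambda>i. mat_extend (transpose_mat (F i) * F i) 1)"
proof -
  have "transpose_mat (tensor_ext d k \<sigma> F) * tensor_ext d k \<sigma> F
      = perm_tensor (Suc d) k id (\<lambda>i. transpose_mat (mat_extend (F i) 1) * mat_extend (F i) 1)"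
    unfolding tensor_ext_def by (rule perm_tensor_gram) (use F \<sigma> in auto)
  also have "\<dots> = perm_tensor (Suc d) k id (\<lambda>i. mat_extend (transpose_mat (F i) * F i) 1)"
    by (rule perm_tensor_cong) (simp_all add: F mat_extend_transpose[of _ d] mat_extend_mult[of _ d])
  finally show ?thesis .
qed

lemma tensor_ext_eq_one_imp_fix:
  assumes d: "0 < d" and F: "\<And>i. i < k \<Longrightarrow> F i \<in> carrier_mat d d"
    and \<sigma>: "bij_betw \<sigma> {..<k} {..<k}"
    and one: "tensor_ext d k \<sigma> F = 1\<^sub>m (Suc d ^ k)" and i: "i < k"
  shows "\<sigma> i = i"
proof (rule ccontr)
  assume ne: "\<sigma> i \<noteq> i"
  have \<sigma>i: "\<sigma> i < k" using \<sigma> i by (auto simp: bij_betw_def)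
  have "\<exists>q < Suc d ^ k. \<forall>j<k. digit (Suc d) q j = (if j = \<sigma> i then 0 else d)"
    by (rule digits_surj) simp
  then obtain q where q: "q < Suc d ^ k" "\<forall>j<k. digit (Suc d) q j = (if j = \<sigma> i then 0 else d)"
    by blast
  \<comment> \<open>the factor at position \<open>i\<close> contributes the entry \<open>(0, d)\<close> of \<open>mat_extend (F i) 1\<close>, which is zero\<close>
  have "mat_extend (F i) 1 $$ (digit (Suc d) q (\<sigma> i), digit (Suc d) q i) = 0"
    using q(2) i \<sigma>i ne F[OF i] d by (simp add: mat_extend_index)
  then have "tensor_ext d k \<sigma> F $$ (q, q) = 0"
    using q(1) i unfolding tensor_ext_def by (auto simp: perm_tensor_index intro!: prod_zero bexI[of _ i])
  then show False using one q(1) by simp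
qed

lemma tensor_ext_eq_one_imp_factor:
  assumes d: "0 < d" and F: "\<And>i. i < k \<Longrightarrow> F i \<in> carrier_mat d d"
    and \<sigma>: "bij_betw \<sigma> {..<k} {..<k}"
    and one: "tensor_ext d k \<sigma> F = 1\<^sub>m (Suc d ^ k)" and i: "i < k"
  shows "F i = 1\<^sub>m d"
proof (rule eq_matI)
  fix a b assume "a < dim_row (1\<^sub>m d :: 'a mat)" "b < dim_col (1\<^sub>m d :: 'a mat)"
  then have a: "a < d" and b: "b < d" by auto
  have "\<exists>p < Suc d ^ k. \<forall>j<k. digit (Suc d) p j = (if j = i then a else d)"
    by (rule digits_surj) (simp add: a less_Suc_eq)
  then obtain p where p: "p < Suc d ^ k" "\<forall>j<k. digit (Suc d) p j = (if j = i then a else d)"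
    by blast
  have "\<exists>q < Suc d ^ k. \<forall>j<k. digit (Suc d) q j = (if j = i then b else d)"
    by (rule digits_surj) (simp add: b less_Suc_eq)
  then obtain q where q: "q < Suc d ^ k" "\<forall>j<k. digit (Suc d) q j = (if j = i then b else d)"
    by blast
  have \<sigma>_id: "\<sigma> j = j" if "j < k" for j
    using d F \<sigma> one that by (rule tensor_ext_eq_one_imp_fix)
  have "tensor_ext d k \<sigma> F $$ (p, q)
      = mat_extend (F i) 1 $$ (a, b) * (\<Prod>j\<in>{..<k} - {i}. mat_extend (F j) 1 $$ (d, d))"
    using p q i \<sigma>_id unfolding tensor_ext_def by (simp add: perm_tensor_index prod.remove)
  also have "\<dots> = F i $$ (a, b)"
  proof -
    have "mat_extend (F j) 1 $$ (d, d) = 1" if "j < k" for j using F[OF that] by (simp add: mat_extend_index)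
    then show ?thesis using a b F[OF i] by (simp add: mat_extend_index)
  qed
  finally have "F i $$ (a, b) = (if p = q then 1 else 0)" using one p q by simp
  moreover have "p = q \<longleftrightarrow> a = b"
    using p q i digits_eq_imp_eq[of "Suc d" p k q] by auto
  ultimately show "F i $$ (a, b) = 1\<^sub>m d $$ (a, b)" using a b by simp
qed (use F i in auto)

lemma sl_extend_carrier [simp]: "A \<in> carrier_mat n n \<Longrightarrow> sl_extend A \<in> carrier_mat (Suc n) (Suc n)"
  unfolding sl_extend_def by simp

lemma sl_extend_mult:
  assumes "A \<in> carrier_mat n n" and "B \<in> carrier_mat n n"
  shows "sl_extend (A * B) = sl_extend A * sl_extend B"
  unfolding sl_extend_def using assms by (simp add: mat_extend_mult det_mult)

lemma det_sl_extend: "A \<in> carrier_mat n n \<Longrightarrow> det (sl_extend A) = det A ^ 2"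
  unfolding sl_extend_def by (simp add: det_mat_extend power2_eq_square)

lemma sl_extend_gram:
  assumes "A \<in> carrier_mat n n" and "det A ^ 2 = 1"
  shows "transpose_mat (sl_extend A) * sl_extend A = mat_extend (transpose_mat A * A) 1"
  unfolding sl_extend_def using assms
  by (simp add: mat_extend_transpose mat_extend_mult[of _ n] power2_eq_square)

lemma gram_mat_extend_triangularization:
  fixes A :: "real mat"
  assumes A: "A \<in> carrier_mat d d" and det: "det A \<noteq> 0"
  shows "\<exists>T P Q. similar_mat_wit (mat_extend (transpose_mat A * A) 1) T P Q
    \<and> T \<in> carrier_mat (Suc d) (Suc d) \<and> upper_triangular T \<and> (\<forall>j < Suc d. T $$ (j, j) = sing_sq_ext A j)"
proof -
  obtain T where T: "similar_mat (transpose_mat A * A) T" "T \<in> carrier_mat d d"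
    "upper_triangular T" "diag_mat T = sing_sq A"
    using gram_triangularization[OF A det] .
  then obtain P Q where "similar_mat_wit (transpose_mat A * A) T P Q" unfolding similar_mat_def by blast
  then have "similar_mat_wit (mat_extend (transpose_mat A * A) 1) (mat_extend T 1) (mat_extend P 1) (mat_extend Q 1)"
    using A by (intro similar_mat_wit_mat_extend[of _ _ _ _ d]) auto
  moreover have "mat_extend T 1 $$ (j, j) = sing_sq_ext A j" if "j < Suc d" for j
    using that T(2,4) A
    by (auto simp: mat_extend_index sing_sq_ext_def diag_mat_def dest!: arg_cong[where f = "\<lambda>xs. xs ! j"])
  ultimately show ?thesis
    using T(2,3) by (intro exI[of _ "mat_extend T 1"] exI) (auto intro: upper_triangular_mat_extend)
qed

lemma tensor_ext_gram_triangularization: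
  fixes F :: "nat \<Rightarrow> real mat"
  assumes F: "\<And>i. i < k \<Longrightarrow> F i \<in> carrier_mat d d" and det: "\<And>i. i < k \<Longrightarrow> det (F i) \<noteq> 0"
    and \<sigma>: "bij_betw \<sigma> {..<k} {..<k}"
  shows "\<exists>U P Q. similar_mat_wit (transpose_mat (tensor_ext d k \<sigma> F) * tensor_ext d k \<sigma> F) U P Q
    \<and> U \<in> carrier_mat (Suc d ^ k) (Suc d ^ k) \<and> upper_triangular U
    \<and> (\<forall>p < Suc d ^ k. U $$ (p, p) = (\<Prod>i<k. sing_sq_ext (F i) (digit (Suc d) p i)))"
proof -
  have "\<exists>T P Q. similar_mat_wit (mat_extend (transpose_mat (F i) * F i) 1) T P Q
      \<and> T \<in> carrier_mat (Suc d) (Suc d) \<and> upper_triangular T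
      \<and> (\<forall>j < Suc d. T $$ (j, j) = sing_sq_ext (F i) j)" if "i < k" for i
    using gram_mat_extend_triangularization[OF F[OF that] det[OF that]] .
  then obtain T P Q
    where sim: "\<And>i. i < k \<Longrightarrow> similar_mat_wit (mat_extend (transpose_mat (F i) * F i) 1) (T i) (P i) (Q i)"
      and T: "\<And>i. i < k \<Longrightarrow> T i \<in> carrier_mat (Suc d) (Suc d)" "\<And>i. i < k \<Longrightarrow> upper_triangular (T i)"
      and diag: "\<And>i j. i < k \<Longrightarrow> j < Suc d \<Longrightarrow> T i $$ (j, j) = sing_sq_ext (F i) j"
    by metis
  have gram: "transpose_mat (tensor_ext d k \<sigma> F) * tensor_ext d k \<sigma> F
      = perm_tensor (Suc d) k id (\<lambda>i. mat_extend (transpose_mat (F i) * F i) 1)"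
    using F \<sigma> by (rule tensor_ext_gram)
  have "similar_mat_wit (transpose_mat (tensor_ext d k \<sigma> F) * tensor_ext d k \<sigma> F)
      (perm_tensor (Suc d) k id T) (perm_tensor (Suc d) k id P) (perm_tensor (Suc d) k id Q)"
  proof -
    have "mat_extend (transpose_mat (F i) * F i) 1 \<in> carrier_mat (Suc d) (Suc d)" if "i < k" for i
      using F[OF that] by simp
    then show ?thesis unfolding gram using sim by (intro similar_mat_wit_perm_tensor_id) auto
  qed
  moreover have "upper_triangular (perm_tensor (Suc d) k id T)"
    using T by (intro upper_triangular_perm_tensor_id) auto
  moreover have "perm_tensor (Suc d) k id T $$ (p, p) = (\<Prod>i<k. sing_sq_ext (F i) (digit (Suc d) p i))"
    if "p < Suc d ^ k" for p
    using that by (simp add: perm_tensor_index digit_less diag)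
  ultimately show ?thesis by (intro exI) auto
qed

lemma prod_sing_sq_ext:
  fixes A :: "real mat"
  assumes "A \<in> carrier_mat d d" and "det A \<noteq> 0"
  shows "(\<Prod>j<Suc d. sing_sq_ext A j) = det A ^ 2"
proof -
  have "(\<Prod>j<Suc d. sing_sq_ext A j) = (\<Prod>j\<in>{0..<length (sing_sq A)}. sing_sq A ! j)"
    using assms(1) sing_sq_char_poly(3)[OF assms] by (simp add: sing_sq_ext_def atLeast0LessThan)
  also have "\<dots> = det A ^ 2"
    using prod_list_sing_sq[OF assms] by (simp add: prod.list_conv_set_nth)
  finally show ?thesis .
qed

lemma det_tensor_ext_square:
  fixes F :: "nat \<Rightarrow> real mat"
  assumes F: "\<And>i. i < k \<Longrightarrow> F i \<in> carrier_mat d d" and det: "\<And>i. i < k \<Longrightarrow> det (F i) = 1"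
    and \<sigma>: "bij_betw \<sigma> {..<k} {..<k}"
  shows "det (tensor_ext d k \<sigma> F) ^ 2 = 1"
proof -
  let ?M = "tensor_ext d k \<sigma> F"
  have det': "det (F i) \<noteq> 0" if "i < k" for i using det[OF that] by simp
  obtain U P Q where sim: "similar_mat_wit (transpose_mat ?M * ?M) U P Q"
    and U: "U \<in> carrier_mat (Suc d ^ k) (Suc d ^ k)" "upper_triangular U"
    and diag: "\<And>p. p < Suc d ^ k \<Longrightarrow> U $$ (p, p) = (\<Prod>i<k. sing_sq_ext (F i) (digit (Suc d) p i))"
    using tensor_ext_gram_triangularization[OF _ _ \<sigma>, of F] F det' by blast
  have "similar_mat (transpose_mat ?M * ?M) U" using sim unfolding similar_mat_def by blast
  have "det ?M ^ 2 = det (transpose_mat ?M * ?M)"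
    by (simp add: det_mult[of _ "Suc d ^ k"] det_transpose[of _ "Suc d ^ k"] power2_eq_square)
  also have "\<dots> = det U" by (rule det_similar) fact
  also have "\<dots> = (\<Prod>p<Suc d ^ k. \<Prod>i<k. sing_sq_ext (F i) (digit (Suc d) p i))"
    using U by (simp add: det_upper_triangular prod_list_diag_prod atLeast0LessThan diag)
  also have "\<dots> = 1"
  proof (rule prod_prod_digits_eq_1)
    fix i assume "i < k"
    then show "(\<Prod>j<Suc d. sing_sq_ext (F i) j) = 1" using prod_sing_sq_ext[OF F det'] det by simp
  qed
  finally show ?thesis .
qed

lemma char_poly_sl_extend_tensor_ext_gram:
  fixes F :: "nat \<Rightarrow> real mat"
  assumes F: "\<And>i. i < k \<Longrightarrow> F i \<in> carrier_mat d d" and det: "\<And>i. i < k \<Longrightarrow> det (F i) = 1"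
    and \<sigma>: "bij_betw \<sigma> {..<k} {..<k}"
  defines "R \<equiv> sl_extend (tensor_ext d k \<sigma> F)"
    and "w \<equiv> \<lambda>p. \<Prod>i<k. sing_sq_ext (F i) (digit (Suc d) p i)"
  shows "char_poly (transpose_mat R * R) = (\<Prod>x\<leftarrow>map w [0..<Suc d ^ k] @ [1]. [:-x, 1:])"
proof -
  let ?M = "tensor_ext d k \<sigma> F"
  have det': "det (F i) \<noteq> 0" if "i < k" for i using det[OF that] by simp
  obtain U P Q where sim: "similar_mat_wit (transpose_mat ?M * ?M) U P Q"
    and U: "U \<in> carrier_mat (Suc d ^ k) (Suc d ^ k)" "upper_triangular U"
    and diag: "\<And>p. p < Suc d ^ k \<Longrightarrow> U $$ (p, p) = w p"
    unfolding w_def using tensor_ext_gram_triangularization[OF _ _ \<sigma>, of F] F det' by blast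
  have "transpose_mat R * R = mat_extend (transpose_mat ?M * ?M) 1"
    unfolding R_def using F det \<sigma> by (intro sl_extend_gram[of _ "Suc d ^ k"] det_tensor_ext_square) simp_all
  moreover have "similar_mat (mat_extend (transpose_mat ?M * ?M) 1) (mat_extend U 1)"
  proof -
    have "transpose_mat ?M * ?M \<in> carrier_mat (Suc d ^ k) (Suc d ^ k)"
      by (intro mult_carrier_mat[of _ _ "Suc d ^ k"]) simp_all
    from similar_mat_wit_mat_extend[OF sim this] show ?thesis unfolding similar_mat_def by blast
  qed
  ultimately have "char_poly (transpose_mat R * R) = char_poly (mat_extend U 1)"
    by (simp add: char_poly_similar)
  also have "\<dots> = (\<Prod>x\<leftarrow>diag_mat (mat_extend U 1). [:-x, 1:])"
    using U by (intro char_poly_upper_triangular[of _ "Suc (Suc d ^ k)"] upper_triangular_mat_extend) auto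
  also have "diag_mat (mat_extend U 1) = map w [0..<Suc d ^ k] @ [1]"
    using U by (auto simp: diag_mat_def mat_extend_index diag nth_append intro!: nth_equalityI)
  finally show ?thesis .
qed

lemma prod_list_pos_le_one:
  fixes xs :: "real list"
  assumes "\<forall>x\<in>set xs. 0 < x \<and> x \<le> 1"
  shows "0 < prod_list xs \<and> prod_list xs \<le> 1"
  using assms by (induction xs) (auto simp: mult_le_one)

lemma sorted_prod_eq_1_top_two_ge_1:
  fixes a b :: real
  assumes sorted: "sorted_wrt (\<ge>) (a # b # rest)" and pos: "\<forall>x\<in>set (a # b # rest). 0 < x"
    and prod: "prod_list (a # b # rest) = 1"
  shows "1 \<le> a * b"
proof (cases "1 \<le> b")
  case True
  then have "1 * 1 \<le> a * b" using sorted by (intro mult_mono) auto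
  then show ?thesis by simp
next
  case False
  then have rest: "0 < prod_list rest \<and> prod_list rest \<le> 1"
    using sorted pos by (intro prod_list_pos_le_one) force
  have "a * b * prod_list rest = 1" using prod by (simp add: mult.assoc)
  moreover have "prod_list rest \<noteq> 0" using rest by (metis order_less_irrefl)
  ultimately have "a * b = 1 / prod_list rest" by (simp add: field_simps)
  then show ?thesis using rest by (simp add: le_divide_eq)
qed

lemma sing_sq_ext_pos:
  fixes A :: "real mat"
  assumes "A \<in> carrier_mat d d" and "det A \<noteq> 0"
  shows "0 < sing_sq_ext A j"
proof (cases "j < d")
  case True
  then have "sing_sq A ! j \<in> set (sing_sq A)" using sing_sq_char_poly(3)[OF assms] by simp
  then show ?thesis using True assms(1) sing_sq_char_poly(2)[OF assms] by (simp add: sing_sq_ext_def)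
qed (use assms(1) in \<open>simp add: sing_sq_ext_def\<close>)

lemma sing_sq_ext_le_top:
  fixes A :: "real mat"
  assumes A: "A \<in> carrier_mat d d" and det: "det A = 1" and d: "2 \<le> d"
    and \<Lambda>: "0 \<le> \<Lambda>" "\<Lambda> \<le> mu 1 A - mu 2 A" and j: "0 < j" "j \<le> d"
  shows "sing_sq_ext A j \<le> sing_sq_ext A 0 * exp (- \<Lambda>)"
proof -
  have det0: "det A \<noteq> 0" using det by simp
  note s = sing_sq_char_poly[OF A det0]
  obtain a b rest where abr: "sing_sq A = a # b # rest"
    using s(3) d by (cases "sing_sq A" rule: remdups_adj.cases) auto
  have pos: "\<forall>x\<in>set (a # b # rest). 0 < x" and sorted: "sorted_wrt (\<ge>) (a # b # rest)"
    using s(2,4) unfolding abr by simp_all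
  have "prod_list (a # b # rest) = 1" using prod_list_sing_sq[OF A det0] det abr by simp
  then have "1 \<le> a * b" by (rule sorted_prod_eq_1_top_two_ge_1[OF sorted pos])
  then have "0 \<le> ln a + ln b" using pos by (simp add: ln_mult_pos[symmetric])
  moreover have gap: "2 * \<Lambda> \<le> ln a - ln b" using \<Lambda>(2) mu_diff_eq[of A] abr pos by simp
  ultimately have "\<Lambda> \<le> ln a" by linarith
  then have "exp \<Lambda> \<le> a" using pos ln_ge_iff[of a \<Lambda>] by simp
  then have top: "1 \<le> a * exp (- \<Lambda>)" using pos by (simp add: exp_minus field_simps)
  have top0: "sing_sq_ext A 0 = a" using A d abr by (simp add: sing_sq_ext_def)
  show ?thesis
  proof (cases "j < d")
    case True
    have "sing_sq A ! j \<le> b"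
      using sorted_wrt_nth_less[OF s(4), of 1 j] True j s(3) abr by (cases "j = 1") auto
    also have "b \<le> a * exp (- \<Lambda>)"
    proof -
      have "ln b \<le> ln a - \<Lambda>" using gap \<Lambda>(1) by simp
      then have "exp (ln b) \<le> exp (ln a - \<Lambda>)" by simp
      then have "b \<le> exp (ln a - \<Lambda>)" using pos by simp
      then show ?thesis using pos by (simp add: exp_diff exp_minus field_simps)
    qed
    finally show ?thesis using True A top0 by (simp add: sing_sq_ext_def)
  next
    case False
    then show ?thesis using A top top0 by (simp add: sing_sq_ext_def)
  qed
qed

lemma prod_le_prod_top_mult:
  fixes f :: "nat \<Rightarrow> nat \<Rightarrow> real"
  assumes i1: "i1 < k" "x i1 \<noteq> 0"
    and nonneg: "\<And>i. i < k \<Longrightarrow> 0 \<le> f i (x i)"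
    and top: "\<And>i. i < k \<Longrightarrow> f i (x i) \<le> f i 0"
    and gap: "\<And>i. i < k \<Longrightarrow> x i \<noteq> 0 \<Longrightarrow> f i (x i) \<le> f i 0 * c"
  shows "(\<Prod>i<k. f i (x i)) \<le> (\<Prod>i<k. f i 0) * c"
proof -
  have "(\<Prod>i<k. f i (x i)) = f i1 (x i1) * (\<Prod>i\<in>{..<k} - {i1}. f i (x i))"
    using i1 by (simp add: prod.remove)
  also have "\<dots> \<le> (f i1 0 * c) * (\<Prod>i\<in>{..<k} - {i1}. f i 0)"
    using gap[OF i1] nonneg[OF i1(1)] nonneg top
    by (intro mult_mono prod_mono prod_nonneg) (auto intro: order_trans)
  also have "\<dots> = (\<Prod>i<k. f i 0) * c"
    using i1 by (simp add: prod.remove ac_simps)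
  finally show ?thesis .
qed

lemma one_le_prod_mult:
  fixes f :: "nat \<Rightarrow> real"
  assumes i0: "i0 < k" and top: "1 \<le> f i0 * c" and ge1: "\<And>i. i < k \<Longrightarrow> 1 \<le> f i"
  shows "1 \<le> (\<Prod>i<k. f i) * c"
proof -
  have "1 * 1 \<le> (f i0 * c) * (\<Prod>i\<in>{..<k} - {i0}. f i)"
    using top ge1 by (intro mult_mono prod_ge_1) auto
  also have "\<dots> = (\<Prod>i<k. f i) * c" using i0 by (simp add: prod.remove ac_simps)
  finally show ?thesis by simp
qed

lemma tensor_weights_bounds:
  fixes F :: "nat \<Rightarrow> real mat"
  assumes d: "2 \<le> d" and k: "0 < k"
    and F: "\<And>i. i < k \<Longrightarrow> F i \<in> carrier_mat d d" and det: "\<And>i. i < k \<Longrightarrow> det (F i) = 1"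
    and \<Lambda>: "0 \<le> \<Lambda>" "\<And>i. i < k \<Longrightarrow> \<Lambda> \<le> mu 1 (F i) - mu 2 (F i)"
  defines "w \<equiv> \<lambda>p. \<Prod>i<k. sing_sq_ext (F i) (digit (Suc d) p i)"
  shows "0 < w 0" and "\<forall>x\<in>set (map w [1..<Suc d ^ k] @ [1]). 0 < x \<and> x \<le> w 0 * exp (- \<Lambda>)"
proof -
  have pos: "0 < sing_sq_ext (F i) j" if "i < k" for i j
    using sing_sq_ext_pos[OF F[OF that]] det[OF that] by simp
  have gap: "sing_sq_ext (F i) j \<le> sing_sq_ext (F i) 0 * exp (- \<Lambda>)" if "i < k" "0 < j" "j \<le> d" for i j
    using sing_sq_ext_le_top[OF F[OF that(1)] det[OF that(1)] d \<Lambda>(1) \<Lambda>(2)[OF that(1)] that(2,3)] .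
  have top: "sing_sq_ext (F i) j \<le> sing_sq_ext (F i) 0" if "i < k" "j \<le> d" for i j
  proof (cases "j = 0")
    case False
    have "sing_sq_ext (F i) 0 * exp (- \<Lambda>) \<le> sing_sq_ext (F i) 0"
      using pos[OF that(1)] \<Lambda>(1) by (simp add: mult_le_cancel_left1)
    then show ?thesis using gap[OF that(1) _ that(2)] False by simp
  qed simp
  have w0: "w 0 = (\<Prod>i<k. sing_sq_ext (F i) 0)" unfolding w_def by simp
  show "0 < w 0" unfolding w0 by (rule prod_pos) (simp add: pos)
  have pos_w: "0 < w p" for p unfolding w_def by (rule prod_pos) (simp add: pos)
  have gap_w: "w p \<le> w 0 * exp (- \<Lambda>)" if p: "0 < p" "p < Suc d ^ k" for p
  proof -
    obtain i1 where "i1 < k" "digit (Suc d) p i1 \<noteq> 0"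
      using digits_eq_imp_eq[of "Suc d" p k 0] p by auto
    moreover have "digit (Suc d) p i \<le> d" for i using digit_less[of "Suc d" p i] by simp
    ultimately show ?thesis unfolding w0 unfolding w_def
      by (intro prod_le_prod_top_mult) (auto intro: less_imp_le pos gap top)
  qed
  have one_w: "1 \<le> w 0 * exp (- \<Lambda>)"
  proof -
    have ext_one: "sing_sq_ext (F i) d = 1" if "i < k" for i
      using F[OF that] by (simp add: sing_sq_ext_def)
    show ?thesis unfolding w0
    proof (rule one_le_prod_mult[OF k])
      show "1 \<le> sing_sq_ext (F 0) 0 * exp (- \<Lambda>)"
        using gap[OF k _ order_refl] ext_one[OF k] d by simp
      show "1 \<le> sing_sq_ext (F i) 0" if "i < k" for i
        using top[OF that order_refl] ext_one[OF that] by simp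
    qed
  qed
  show "\<forall>x\<in>set (map w [1..<Suc d ^ k] @ [1]). 0 < x \<and> x \<le> w 0 * exp (- \<Lambda>)"
    using pos_w gap_w one_w by auto
qed

lemma mu_gap_ge_of_char_poly:
  fixes R :: "real mat"
  assumes cp: "char_poly (transpose_mat R * R) = (\<Prod>x\<leftarrow>a # xs. [:-x, 1:])" and xs: "xs \<noteq> []"
    and a: "0 < a" and \<Lambda>: "0 \<le> \<Lambda>" and bound: "\<forall>x\<in>set xs. 0 < x \<and> x \<le> a * exp (- \<Lambda>)"
  shows "\<Lambda> / 2 \<le> mu 1 R - mu 2 R"
proof -
  have "\<forall>x\<in>set xs. x \<le> a"
    using bound a \<Lambda> by (auto intro: order_trans simp: mult_le_cancel_left1)
  then have sing: "sing_sq R = a # rev (sort xs)"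
    unfolding sing_sq_def by (rule eigs_desc_char_poly_max[OF cp])
  define b where "b = rev (sort xs) ! 0"
  have "0 < length (rev (sort xs))" using xs by simp
  then have "b \<in> set (rev (sort xs))" unfolding b_def by (rule nth_mem)
  then have "b \<in> set xs" by simp
  then have b: "0 < b" "b \<le> a * exp (- \<Lambda>)" using bound by auto
  have "mu 1 R - mu 2 R = (ln a - ln b) / 2" using mu_diff_eq[of R] sing a b by (simp add: b_def)
  moreover have "ln b \<le> ln a - \<Lambda>"
  proof -
    have "ln b \<le> ln (a * exp (- \<Lambda>))" using a b by simp
    also have "\<dots> = ln a - \<Lambda>" using a by (simp add: ln_mult)
    finally show ?thesis .
  qed
  ultimately show ?thesis by simp
qed

lemma mu_gap_sl_extend_tensor_ext:
  fixes F :: "nat \<Rightarrow> real mat"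
  assumes d: "2 \<le> d" and k: "0 < k"
    and F: "\<And>i. i < k \<Longrightarrow> F i \<in> carrier_mat d d" and det: "\<And>i. i < k \<Longrightarrow> det (F i) = 1"
    and \<sigma>: "bij_betw \<sigma> {..<k} {..<k}"
    and \<Lambda>: "0 \<le> \<Lambda>" "\<And>i. i < k \<Longrightarrow> \<Lambda> \<le> mu 1 (F i) - mu 2 (F i)"
  shows "\<Lambda> / 2 \<le> mu 1 (sl_extend (tensor_ext d k \<sigma> F)) - mu 2 (sl_extend (tensor_ext d k \<sigma> F))"
proof -
  define w where "w p = (\<Prod>i<k. sing_sq_ext (F i) (digit (Suc d) p i))" for p
  have "char_poly (transpose_mat (sl_extend (tensor_ext d k \<sigma> F)) * sl_extend (tensor_ext d k \<sigma> F))
      = (\<Prod>x\<leftarrow>map w [0..<Suc d ^ k] @ [1]. [:-x, 1:])"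
    unfolding w_def using F det \<sigma> by (rule char_poly_sl_extend_tensor_ext_gram)
  also have "map w [0..<Suc d ^ k] @ [1] = w 0 # (map w [1..<Suc d ^ k] @ [1])"
    by (simp add: upt_conv_Cons)
  finally have cp: "char_poly (transpose_mat (sl_extend (tensor_ext d k \<sigma> F)) * sl_extend (tensor_ext d k \<sigma> F))
      = (\<Prod>x\<leftarrow>w 0 # (map w [1..<Suc d ^ k] @ [1]). [:-x, 1:])" .
  have w0: "0 < w 0"
    unfolding w_def using d k F det \<Lambda> by (rule tensor_weights_bounds(1))
  have bound: "\<forall>x\<in>set (map w [1..<Suc d ^ k] @ [1]). 0 < x \<and> x \<le> w 0 * exp (- \<Lambda>)"
    unfolding w_def using d k F det \<Lambda> by (rule tensor_weights_bounds(2))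
  show ?thesis by (rule mu_gap_ge_of_char_poly[OF cp _ w0 \<Lambda>(1) bound]) simp
qed

section \<open>Words\<close>

lemma word_eval_Nil [simp]: "word_eval G [] = \<one>\<^bsub>G\<^esub>"
  by (simp add: word_eval_def)

lemma word_eval_Cons [simp]:
  "word_eval G ((s, b) # w) = (if b then s else inv\<^bsub>G\<^esub> s) \<otimes>\<^bsub>G\<^esub> word_eval G w"
  by (simp add: word_eval_def)

lemma word_length_le:
  assumes "fst ` set w \<subseteq> S" and "word_eval G w = x"
  shows "word_length G S x \<le> length w"
  unfolding word_length_def by (rule Least_le) (use assms in auto)

lemma word_length_witness:
  assumes "fst ` set w \<subseteq> S" and "word_eval G w = x"
  shows "\<exists>w. length w = word_length G S x \<and> fst ` set w \<subseteq> S \<and> word_eval G w = x"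
  unfolding word_length_def by (rule LeastI[of _ "length w"]) (use assms in auto)

context group
begin

lemma word_eval_closed: "fst ` set w \<subseteq> carrier G \<Longrightarrow> word_eval G w \<in> carrier G"
proof (induction w)
  case (Cons x w)
  then show ?case by (cases x) auto
qed simp

lemma word_eval_append:
  assumes "fst ` set w \<subseteq> carrier G" and "fst ` set w' \<subseteq> carrier G"
  shows "word_eval G (w @ w') = word_eval G w \<otimes> word_eval G w'"
  using assms
proof (induction w)
  case (Cons x w)
  then show ?case by (cases x) (auto simp: m_assoc word_eval_closed)
qed (simp add: word_eval_closed)

lemma word_eval_subgroup:
  assumes "subgroup H G" and "fst ` set w \<subseteq> H"
  shows "word_eval (G\<lparr>carrier := H\<rparr>) w = word_eval G w"
  using assms(2)
proof (induction w)
  case (Cons x w)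
  then show ?case by (cases x) (auto simp: m_inv_consistent[OF assms(1)])
qed simp

lemma word_eval_in_generate: "fst ` set w \<subseteq> S \<Longrightarrow> word_eval G w \<in> generate G S"
proof (induction w)
  case (Cons x w)
  then show ?case by (cases x) (auto intro: generate.eng generate.incl generate.inv)
qed (simp add: generate.one)

lemma generate_imp_word:
  assumes S: "S \<subseteq> carrier G" and x: "x \<in> generate G S"
  shows "\<exists>w. fst ` set w \<subseteq> S \<and> word_eval G w = x"
  using x
proof (induction rule: generate.induct)
  case one
  show ?case by (rule exI[of _ "[]"]) simp
next
  case (incl h)
  then show ?case using S by (intro exI[of _ "[(h, True)]"]) auto
next
  case (inv h)
  then show ?case using S by (intro exI[of _ "[(h, False)]"]) auto
next
  case (eng h h')
  then obtain w w' where "fst ` set w \<subseteq> S" "word_eval G w = h" "fst ` set w' \<subseteq> S" "word_eval G w' = h'"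
    by blast
  then show ?case using S word_eval_append[of w w'] by (intro exI[of _ "w @ w'"]) auto
qed

end

section \<open>Tensor induction\<close>

lemma idempotent_mat_eq_one:
  fixes A :: "'a :: field mat"
  assumes A: "A \<in> carrier_mat n n" and det: "det A \<noteq> 0" and idem: "A * A = A"
  shows "A = 1\<^sub>m n"
proof -
  obtain B where B: "B \<in> carrier_mat n n" "B * A = 1\<^sub>m n"
    using det_non_zero_imp_unit[OF A det] unfolding Units_def ring_mat_def by auto
  have "A = (B * A) * A" using B A by simp
  also have "\<dots> = B * (A * A)" by (rule assoc_mult_mat[OF B(1) A A])
  finally show ?thesis using idem B by simp
qed

lemma (in group) SL_rep_one:
  assumes "SL_rep G n \<rho>"
  shows "\<rho> \<one> = 1\<^sub>m n"
proof (rule idempotent_mat_eq_one)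
  show "\<rho> \<one> \<in> carrier_mat n n" "det (\<rho> \<one>) \<noteq> 0" using assms unfolding SL_rep_def by auto
  show "\<rho> \<one> * \<rho> \<one> = \<rho> \<one>" using assms unfolding SL_rep_def by (metis one_closed l_one)
qed

locale coset_transversal = normal H G for H and G (structure) +
  fixes k :: nat and t :: "nat \<Rightarrow> 'a"
  assumes transversal_closed: "i < k \<Longrightarrow> t i \<in> carrier G"
    and transversal_bij: "bij_betw (\<lambda>i. H #> t i) {..<k} (rcosets H)"
begin

definition coset_perm :: "'a \<Rightarrow> nat \<Rightarrow> nat" where
  "coset_perm g i = the_inv_into {..<k} (\<lambda>i. H #> t i) (H #> (g \<otimes> t i))"

definition cocycle :: "'a \<Rightarrow> nat \<Rightarrow> 'a" where
  "cocycle g i = inv (t (coset_perm g i)) \<otimes> g \<otimes> t i"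

lemma transversal_inj: "inj_on (\<lambda>i. H #> t i) {..<k}"
  using transversal_bij by (rule bij_betw_imp_inj_on)

lemma transversal_nonempty: "0 < k"
proof -
  have "H #> \<one> \<in> rcosets H" by (rule rcosetsI[OF subset one_closed])
  then show ?thesis using bij_betw_imp_surj_on[OF transversal_bij] by (cases k) auto
qed

lemma coset_perm:
  assumes g: "g \<in> carrier G" and i: "i < k"
  shows "coset_perm g i < k" and "H #> t (coset_perm g i) = H #> (g \<otimes> t i)"
proof -
  have "H #> (g \<otimes> t i) \<in> (\<lambda>i. H #> t i) ` {..<k}"
    unfolding bij_betw_imp_surj_on[OF transversal_bij]
    using g i transversal_closed by (intro rcosetsI subset) auto
  then show "coset_perm g i < k" "H #> t (coset_perm g i) = H #> (g \<otimes> t i)"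
    unfolding coset_perm_def
    using the_inv_into_into[OF transversal_inj] f_the_inv_into_f[OF transversal_inj] by auto
qed

lemma coset_perm_eqI: "j < k \<Longrightarrow> H #> t j = H #> (g \<otimes> t i) \<Longrightarrow> coset_perm g i = j"
  unfolding coset_perm_def by (rule the_inv_into_f_eq[OF transversal_inj]) auto

lemma transversal_coset_perm:
  assumes g: "g \<in> carrier G" and i: "i < k"
  shows "\<exists>x\<in>H. t (coset_perm g i) = g \<otimes> t i \<otimes> x"
proof -
  have "t (coset_perm g i) \<in> H #> t (coset_perm g i)"
    using coset_perm(1)[OF g i] transversal_closed by (intro rcos_self subgroup_axioms) auto
  also have "\<dots> = (g \<otimes> t i) <# H" using coset_perm(2)[OF g i] coset_eq g i transversal_closed by simp
  finally show ?thesis unfolding l_coset_def by blast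
qed

lemma cocycle_closed: assumes "g \<in> carrier G" "i < k" shows "cocycle g i \<in> H"
proof -
  obtain x where x: "x \<in> H" "t (coset_perm g i) = g \<otimes> t i \<otimes> x"
    using transversal_coset_perm[OF assms] by blast
  have "cocycle g i = inv (g \<otimes> t i \<otimes> x) \<otimes> (g \<otimes> t i)"
    unfolding cocycle_def x(2) using assms x(1) transversal_closed by (simp add: m_assoc)
  also have "\<dots> = inv x"
  proof -
    have "g \<otimes> t i \<in> carrier G" "x \<in> carrier G" using assms x(1) transversal_closed subset by auto
    then show ?thesis by (simp add: inv_mult_group m_assoc)
  qed
  finally show ?thesis using x(1) by simp
qed

lemma coset_perm_one: "i < k \<Longrightarrow> coset_perm \<one> i = i"
  by (rule coset_perm_eqI) (auto simp: transversal_closed)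

lemma coset_perm_mult:
  assumes g: "g \<in> carrier G" and g': "g' \<in> carrier G" and i: "i < k"
  shows "coset_perm (g \<otimes> g') i = coset_perm g (coset_perm g' i)"
proof (rule coset_perm_eqI)
  let ?j = "coset_perm g' i"
  have j: "?j < k" using coset_perm(1)[OF g' i] .
  show "coset_perm g ?j < k" using coset_perm(1)[OF g j] .
  obtain x where x: "x \<in> H" "t ?j = g' \<otimes> t i \<otimes> x" using transversal_coset_perm[OF g' i] by blast
  have "g \<otimes> t ?j = g \<otimes> g' \<otimes> t i \<otimes> x" using x g g' i transversal_closed by (simp add: m_assoc)
  also have "\<dots> \<in> (g \<otimes> g' \<otimes> t i) <# H" using x(1) unfolding l_coset_def by blast
  also have "\<dots> = H #> (g \<otimes> g' \<otimes> t i)" using coset_eq g g' i transversal_closed by simp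
  finally have "H #> (g \<otimes> g' \<otimes> t i) = H #> (g \<otimes> t ?j)"
    by (rule repr_independence) (use g g' i transversal_closed subgroup_axioms in auto)
  then show "H #> t (coset_perm g ?j) = H #> (g \<otimes> g' \<otimes> t i)" using coset_perm(2)[OF g j] by simp
qed

lemma coset_perm_bij: assumes g: "g \<in> carrier G" shows "bij_betw (coset_perm g) {..<k} {..<k}"
proof (rule bij_betw_byWitness[where f' = "coset_perm (inv g)"])
  show "\<forall>i\<in>{..<k}. coset_perm (inv g) (coset_perm g i) = i"
    using g by (auto simp: coset_perm_mult[symmetric] coset_perm_one)
  show "\<forall>i\<in>{..<k}. coset_perm g (coset_perm (inv g) i) = i"
    using g by (auto simp: coset_perm_mult[symmetric] coset_perm_one)
  show "coset_perm g ` {..<k} \<subseteq> {..<k}" "coset_perm (inv g) ` {..<k} \<subseteq> {..<k}"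
    using coset_perm(1) g by auto
qed

lemma cocycle_mult:
  assumes g: "g \<in> carrier G" and g': "g' \<in> carrier G" and i: "i < k"
  shows "cocycle (g \<otimes> g') i = cocycle g (coset_perm g' i) \<otimes> cocycle g' i"
proof -
  let ?j = "coset_perm g' i"
  have j: "?j < k" and gj: "coset_perm g ?j < k" using coset_perm(1) g g' i by auto
  have "cocycle g ?j \<otimes> cocycle g' i
      = inv (t (coset_perm g ?j)) \<otimes> (g \<otimes> (t ?j \<otimes> (inv (t ?j) \<otimes> (g' \<otimes> t i))))"
    unfolding cocycle_def using g g' i j gj transversal_closed by (simp add: m_assoc)
  also have "\<dots> = inv (t (coset_perm g ?j)) \<otimes> (g \<otimes> (g' \<otimes> t i))"
    using g' i j transversal_closed by (simp add: m_assoc[symmetric])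
  also have "\<dots> = cocycle (g \<otimes> g') i"
    unfolding cocycle_def coset_perm_mult[OF g g' i] using g g' i gj transversal_closed by (simp add: m_assoc)
  finally show ?thesis by simp
qed

lemma transversal_cocycle_decomp:
  assumes g: "g \<in> carrier G" and i: "i < k"
  shows "t (coset_perm g i) \<otimes> (cocycle g i \<otimes> inv (t i)) = g"
proof -
  have t: "t (coset_perm g i) \<in> carrier G" "t i \<in> carrier G"
    using coset_perm(1)[OF g i] i transversal_closed by auto
  then have "cocycle g i \<otimes> inv (t i) = inv (t (coset_perm g i)) \<otimes> g"
    unfolding cocycle_def using g by (simp add: m_assoc)
  then show ?thesis using t g by (simp add: m_assoc[symmetric])
qed

lemma word_through_transversal:
  assumes g: "g \<in> carrier G" and i: "i < k" and w: "fst ` set w \<subseteq> H" "word_eval G w = cocycle g i"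
  shows "word_eval G ((t (coset_perm g i), True) # w @ [(t i, False)]) = g"
proof -
  have "word_eval G (w @ [(t i, False)]) = cocycle g i \<otimes> inv (t i)"
    using w i subset transversal_closed by (subst word_eval_append) auto
  then show ?thesis using transversal_cocycle_decomp[OF g i] by simp
qed

lemma subgroup_shortest_word:
  assumes SH: "SH \<subseteq> H" "generate (G\<lparr>carrier := H\<rparr>) SH = H" and h: "h \<in> H"
  obtains w where "fst ` set w \<subseteq> SH" "word_eval G w = h"
    and "length w = word_length (G\<lparr>carrier := H\<rparr>) SH h"
proof -
  interpret H: group "G\<lparr>carrier := H\<rparr>" by (rule subgroup_is_group[OF is_group])
  have "SH \<subseteq> carrier (G\<lparr>carrier := H\<rparr>)" "h \<in> generate (G\<lparr>carrier := H\<rparr>) SH" using SH h by simp_all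
  from H.generate_imp_word[OF this] obtain w where "fst ` set w \<subseteq> SH" "word_eval (G\<lparr>carrier := H\<rparr>) w = h"
    by blast
  from word_length_witness[OF this] obtain w' where w': "length w' = word_length (G\<lparr>carrier := H\<rparr>) SH h"
    "fst ` set w' \<subseteq> SH" "word_eval (G\<lparr>carrier := H\<rparr>) w' = h"
    by blast
  have "word_eval (G\<lparr>carrier := H\<rparr>) w' = word_eval G w'"
    using w'(2) SH by (intro word_eval_subgroup subgroup_axioms) blast
  with w' show ?thesis by (intro that[of w']) simp_all
qed

lemma generate_transversal:
  assumes SH: "SH \<subseteq> H" "generate (G\<lparr>carrier := H\<rparr>) SH = H"
  shows "generate G (SH \<union> t ` {..<k}) = carrier G"
proof
  show "generate G (SH \<union> t ` {..<k}) \<subseteq> carrier G"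
    using SH subset transversal_closed by (intro generate_incl) auto
  show "carrier G \<subseteq> generate G (SH \<union> t ` {..<k})"
  proof
    fix g assume g: "g \<in> carrier G"
    have k: "0 < k" by (rule transversal_nonempty)
    obtain w where w: "fst ` set w \<subseteq> SH" "word_eval G w = cocycle g 0"
      "length w = word_length (G\<lparr>carrier := H\<rparr>) SH (cocycle g 0)"
      by (rule subgroup_shortest_word[OF SH cocycle_closed[OF g k]])
    let ?w = "(t (coset_perm g 0), True) # w @ [(t 0, False)]"
    have "fst ` set ?w \<subseteq> SH \<union> t ` {..<k}" using w(1) coset_perm(1)[OF g k] k by auto
    then have "word_eval G ?w \<in> generate G (SH \<union> t ` {..<k})" by (rule word_eval_in_generate)
    moreover have "word_eval G ?w = g" using w SH by (intro word_through_transversal[OF g k]) auto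
    ultimately show "g \<in> generate G (SH \<union> t ` {..<k})" by (simp only:)
  qed
qed

lemma word_length_le_cocycle:
  assumes SH: "SH \<subseteq> H" "generate (G\<lparr>carrier := H\<rparr>) SH = H" and g: "g \<in> carrier G" and i: "i < k"
  shows "word_length G (SH \<union> t ` {..<k}) g \<le> word_length (G\<lparr>carrier := H\<rparr>) SH (cocycle g i) + 2"
proof -
  obtain w where w: "fst ` set w \<subseteq> SH" "word_eval G w = cocycle g i"
    "length w = word_length (G\<lparr>carrier := H\<rparr>) SH (cocycle g i)"
    by (rule subgroup_shortest_word[OF SH cocycle_closed[OF g i]])
  let ?w = "(t (coset_perm g i), True) # w @ [(t i, False)]"
  have "fst ` set ?w \<subseteq> SH \<union> t ` {..<k}" using w(1) coset_perm(1)[OF g i] i by auto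
  moreover have "word_eval G ?w = g" using w SH by (intro word_through_transversal[OF g i]) auto
  ultimately have "word_length G (SH \<union> t ` {..<k}) g \<le> length ?w" by (rule word_length_le)
  then show ?thesis using w(3) by simp
qed

end

lemma finite_rcosets_transversal:
  assumes normal: "H \<lhd> G" and fin: "finite (rcosets\<^bsub>G\<^esub> H)"
  shows "\<exists>k t. coset_transversal H G k t"
proof -
  interpret normal H G by (rule normal)
  obtain cs where cs: "bij_betw cs {..<card (rcosets\<^bsub>G\<^esub> H)} (rcosets\<^bsub>G\<^esub> H)"
    using ex_bij_betw_nat_finite[OF fin] by (auto simp: atLeast0LessThan)
  define t where "t i = (SOME x. x \<in> cs i)" for i
  have t: "t i \<in> carrier G \<and> cs i = H #>\<^bsub>G\<^esub> t i" if i: "i < card (rcosets\<^bsub>G\<^esub> H)" for i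
  proof -
    have "cs i \<in> rcosets\<^bsub>G\<^esub> H" using cs i by (auto simp: bij_betw_def)
    then obtain a where a: "a \<in> carrier G" "cs i = H #>\<^bsub>G\<^esub> a"
      unfolding RCOSETS_def by auto
    have "a \<in> cs i" using a rcos_self[OF a(1) subgroup_axioms] by simp
    then have "t i \<in> cs i" unfolding t_def by (rule someI)
    then show ?thesis
      using a repr_independence[OF _ a(1) subgroup_axioms] r_coset_subset_G[OF subset a(1)] by auto
  qed
  have "bij_betw (\<lambda>i. H #>\<^bsub>G\<^esub> t i) {..<card (rcosets\<^bsub>G\<^esub> H)} (rcosets\<^bsub>G\<^esub> H)"
    using cs by (rule bij_betw_cong[THEN iffD1, rotated]) (simp add: t)
  then show ?thesis using t normal unfolding coset_transversal_def coset_transversal_axioms_def by blast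
qed

locale induced_tensor = coset_transversal H G k t for H and G (structure) and k t +
  fixes d :: nat and \<rho> :: "'a \<Rightarrow> real mat"
  assumes rep: "SL_rep (G\<lparr>carrier := H\<rparr>) d \<rho>"
begin

definition induced_rep :: "'a \<Rightarrow> real mat" where
  "induced_rep g = sl_extend (tensor_ext d k (coset_perm g) (\<lambda>i. \<rho> (cocycle g i)))"

lemma rep_carrier: "h \<in> H \<Longrightarrow> \<rho> h \<in> carrier_mat d d" and rep_det: "h \<in> H \<Longrightarrow> det (\<rho> h) = 1"
  and rep_mult: "h \<in> H \<Longrightarrow> h' \<in> H \<Longrightarrow> \<rho> (h \<otimes> h') = \<rho> h * \<rho> h'"
  using rep unfolding SL_rep_def by auto

lemma rep_one: "\<rho> \<one> = 1\<^sub>m d"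
proof -
  interpret H: group "G\<lparr>carrier := H\<rparr>" by (rule subgroup_is_group[OF is_group])
  show ?thesis using H.SL_rep_one[OF rep] by simp
qed

lemma induced_rep_mult:
  assumes g: "g \<in> carrier G" and g': "g' \<in> carrier G"
  shows "induced_rep (g \<otimes> g') = induced_rep g * induced_rep g'"
proof -
  have "tensor_ext d k (coset_perm g) (\<lambda>i. \<rho> (cocycle g i)) * tensor_ext d k (coset_perm g') (\<lambda>i. \<rho> (cocycle g' i))
      = tensor_ext d k (coset_perm g \<circ> coset_perm g') (\<lambda>i. \<rho> (cocycle g (coset_perm g' i)) * \<rho> (cocycle g' i))"
    using g g' coset_perm_bij[OF g'] by (intro tensor_ext_mult) (auto intro: rep_carrier cocycle_closed)
  also have "\<dots> = tensor_ext d k (coset_perm (g \<otimes> g')) (\<lambda>i. \<rho> (cocycle (g \<otimes> g') i))"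
    unfolding tensor_ext_def using g g'
    by (intro perm_tensor_cong) (simp_all add: coset_perm_mult cocycle_mult rep_mult cocycle_closed coset_perm(1))
  finally show ?thesis
    unfolding induced_rep_def
    using sl_extend_mult[of "tensor_ext d k (coset_perm g) (\<lambda>i. \<rho> (cocycle g i))" "Suc d ^ k"
        "tensor_ext d k (coset_perm g') (\<lambda>i. \<rho> (cocycle g' i))"]
    by simp
qed

lemma SL_rep_induced_rep: "SL_rep G (Suc (Suc d ^ k)) induced_rep"
  unfolding SL_rep_def
proof (intro conjI ballI)
  fix g assume g: "g \<in> carrier G"
  show "induced_rep g \<in> carrier_mat (Suc (Suc d ^ k)) (Suc (Suc d ^ k))"
    unfolding induced_rep_def by simp
  have "det (tensor_ext d k (coset_perm g) (\<lambda>i. \<rho> (cocycle g i))) ^ 2 = 1"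
    using g coset_perm_bij[OF g] by (intro det_tensor_ext_square) (auto intro: rep_carrier rep_det cocycle_closed)
  then show "det (induced_rep g) = 1" unfolding induced_rep_def by (simp add: det_sl_extend[of _ "Suc d ^ k"])
next
  fix g g' assume "g \<in> carrier G" "g' \<in> carrier G"
  then show "induced_rep (g \<otimes> g') = induced_rep g * induced_rep g'" by (rule induced_rep_mult)
qed

lemma induced_rep_eq_one_imp:
  assumes d: "0 < d" and inj: "inj_on \<rho> H" and g: "g \<in> carrier G"
    and one: "induced_rep g = 1\<^sub>m (Suc (Suc d ^ k))"
  shows "g = \<one>"
proof -
  have k: "0 < k" by (rule transversal_nonempty)
  let ?F = "\<lambda>i. \<rho> (cocycle g i)"
  have F: "?F i \<in> carrier_mat d d" if "i < k" for i using rep_carrier cocycle_closed g that by blast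
  have M: "tensor_ext d k (coset_perm g) ?F = 1\<^sub>m (Suc d ^ k)"
    using one unfolding induced_rep_def sl_extend_def by (rule mat_extend_eq_one_imp[rotated]) simp
  have "coset_perm g 0 = 0"
    using d F coset_perm_bij[OF g] M k by (rule tensor_ext_eq_one_imp_fix)
  moreover have "\<rho> (cocycle g 0) = \<rho> \<one>"
    using tensor_ext_eq_one_imp_factor[OF d _ coset_perm_bij[OF g] M k] F rep_one by simp
  then have "cocycle g 0 = \<one>" using inj cocycle_closed[OF g k] by (auto dest: inj_onD)
  ultimately show ?thesis using transversal_cocycle_decomp[OF g k] transversal_closed[OF k] by simp
qed

lemma inj_on_induced_rep:
  assumes "0 < d" and "inj_on \<rho> H"
  shows "inj_on induced_rep (carrier G)"
proof (rule inj_onI)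
  fix x y assume x: "x \<in> carrier G" and y: "y \<in> carrier G" and eq: "induced_rep x = induced_rep y"
  have "induced_rep (inv y \<otimes> x) = induced_rep (inv y) * induced_rep y"
    using x y eq by (simp add: induced_rep_mult)
  also have "\<dots> = induced_rep \<one>" using y by (simp add: induced_rep_mult[symmetric])
  also have "\<dots> = 1\<^sub>m (Suc (Suc d ^ k))" by (rule SL_rep_one[OF SL_rep_induced_rep])
  finally have "inv y \<otimes> x = \<one>" using x y by (intro induced_rep_eq_one_imp[OF assms]) auto
  then show "x = y" using x y by (metis inv_closed inv_inv inv_equality r_inv m_closed l_one)
qed

lemma mu_gap_induced_rep:
  assumes d: "2 \<le> d" and g: "g \<in> carrier G" and \<Lambda>: "0 \<le> \<Lambda>"
    and gap: "\<And>i. i < k \<Longrightarrow> \<Lambda> \<le> mu 1 (\<rho> (cocycle g i)) - mu 2 (\<rho> (cocycle g i))"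
  shows "\<Lambda> / 2 \<le> mu 1 (induced_rep g) - mu 2 (induced_rep g)"
  unfolding induced_rep_def
  using d transversal_nonempty _ _ coset_perm_bij[OF g] \<Lambda> gap
  by (rule mu_gap_sl_extend_tensor_ext) (use g in \<open>auto intro: rep_carrier rep_det cocycle_closed\<close>)

lemma induced_rep_linear_gap:
  assumes d: "2 \<le> d" and SH: "SH \<subseteq> H" "generate (G\<lparr>carrier := H\<rparr>) SH = H" and c: "0 < c"
    and bound: "\<And>h. h \<in> H \<Longrightarrow> c * real (word_length (G\<lparr>carrier := H\<rparr>) SH h) - C \<le> mu 1 (\<rho> h) - mu 2 (\<rho> h)"
    and g: "g \<in> carrier G"
  shows "c / 2 * real (word_length G (SH \<union> t ` {..<k}) g) - (c + C / 2)
    \<le> mu 1 (induced_rep g) - mu 2 (induced_rep g)"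
proof -
  let ?n = "real (word_length G (SH \<union> t ` {..<k}) g)"
  define \<Lambda> where "\<Lambda> = max 0 (c * (?n - 2) - C)"
  have "\<Lambda> \<le> mu 1 (\<rho> (cocycle g i)) - mu 2 (\<rho> (cocycle g i))" if i: "i < k" for i
  proof -
    have h: "cocycle g i \<in> H" by (rule cocycle_closed[OF g i])
    have "?n - 2 \<le> real (word_length (G\<lparr>carrier := H\<rparr>) SH (cocycle g i))"
      using word_length_le_cocycle[OF SH g i] by linarith
    then have "c * (?n - 2) \<le> c * real (word_length (G\<lparr>carrier := H\<rparr>) SH (cocycle g i))"
      using c by (intro mult_left_mono) auto
    then have "c * (?n - 2) - C \<le> mu 1 (\<rho> (cocycle g i)) - mu 2 (\<rho> (cocycle g i))"
      using bound[OF h] by linarith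
    moreover have "0 \<le> mu 1 (\<rho> (cocycle g i)) - mu 2 (\<rho> (cocycle g i))"
      using rep_carrier[OF h] rep_det[OF h] d by (intro mu_gap_nonneg) auto
    ultimately show ?thesis unfolding \<Lambda>_def by simp
  qed
  then have "\<Lambda> / 2 \<le> mu 1 (induced_rep g) - mu 2 (induced_rep g)"
    using d g by (intro mu_gap_induced_rep) (auto simp: \<Lambda>_def)
  moreover have "c / 2 * ?n - (c + C / 2) \<le> \<Lambda> / 2"
  proof -
    have "c / 2 * ?n - (c + C / 2) = (c * (?n - 2) - C) / 2" by (simp add: field_simps)
    also have "\<dots> \<le> \<Lambda> / 2" unfolding \<Lambda>_def by (intro divide_right_mono) simp_all
    finally show ?thesis .
  qed
  ultimately show ?thesis by linarith
qed

lemma P_Anosov_induced_rep: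
  assumes "P_Anosov (G\<lparr>carrier := H\<rparr>) d 1 \<rho>"
  shows "P_Anosov G (Suc (Suc d ^ k)) 1 induced_rep"
proof -
  from assms obtain SH c C where d: "2 \<le> d" and SH: "finite SH" "SH \<subseteq> H" "generate (G\<lparr>carrier := H\<rparr>) SH = H"
    and c: "0 < c" "0 < C"
    and bound: "\<And>h. h \<in> H \<Longrightarrow> c * real (word_length (G\<lparr>carrier := H\<rparr>) SH h) - C \<le> mu 1 (\<rho> h) - mu 2 (\<rho> h)"
    unfolding P_Anosov_def one_add_one by auto
  let ?S = "SH \<union> t ` {..<k}"
  have "\<forall>g\<in>carrier G. c / 2 * real (word_length G ?S g) - (c + C / 2)
      \<le> mu 1 (induced_rep g) - mu 2 (induced_rep g)"
    using induced_rep_linear_gap[OF d SH(2,3) c(1) bound] by blast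
  moreover have "finite ?S" "?S \<subseteq> carrier G" "generate G ?S = carrier G"
    using SH subset transversal_closed generate_transversal[OF SH(2,3)] by auto
  ultimately show ?thesis
    unfolding P_Anosov_def one_add_one using SL_rep_induced_rep c
    by (intro conjI exI[of _ ?S] exI[of _ "c / 2"] exI[of _ "c + C / 2"]) auto
qed

end

theorem lemma2p1:
  fixes G :: "('a, 'b) monoid_scheme" and H :: "'a set" and d :: nat and \<rho>0 :: "'a \<Rightarrow> real mat"
  assumes "group G"
    and "H \<lhd> G"
    and "finite (rcosets\<^bsub>G\<^esub> H)"
    and "P_Anosov (G\<lparr>carrier := H\<rparr>) d 1 \<rho>0"
    and "faithful (G\<lparr>carrier := H\<rparr>) \<rho>0"
  shows "\<exists>(r::nat) \<rho>. P_Anosov G r 1 \<rho> \<and> faithful G \<rho>"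
proof -
  obtain k t where "coset_transversal H G k t"
    using finite_rcosets_transversal[OF assms(2,3)] by blast
  moreover have "SL_rep (G\<lparr>carrier := H\<rparr>) d \<rho>0" and d: "2 \<le> d"
    using assms(4) unfolding P_Anosov_def by auto
  ultimately interpret induced_tensor H G k t d \<rho>0
    unfolding induced_tensor_def induced_tensor_axioms_def by blast
  have "P_Anosov G (Suc (Suc d ^ k)) 1 induced_rep"
    by (rule P_Anosov_induced_rep[OF assms(4)])
  moreover have "faithful G induced_rep"
    unfolding faithful_def using d assms(5) by (intro inj_on_induced_rep) (auto simp: faithful_def)
  ultimately show ?thesis by blast
qed

end
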